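(* Let $q\in\mathbb{R}$ with $q\neq 0$ and let $\hbar\in\mathbb{R}$. Let $\mathcal{H}$ be the unital associative $\mathbb{C}$-algebra generated by $\hat{x},\hat{p},\hat{\Lambda}$ subject to the relations \[ q^{1/2}\hat{x}\hat{p}-q^{-1/2}\hat{p}\hat{x}=i\hbar\hat{\Lambda},\qquad \hat{\Lambda}\hat{x}=q^{-1}\hat{x}\hat{\Lambda},\qquad \hat{\Lambda}\hat{p}=q\hat{p}\hat{\Lambda}. \] Then $\mathcal{H}$ is (via the identity on generators) the iterated Ore extension \[ R=\mathbb{C}[\hat{\Lambda}][\hat{p};\sigma_{\hat{p}},\delta_{\hat{p}}][\hat{x};\sigma_{\hat{x}},\delta_{\hat{x}}] \] whose data are given by \[ \sigma_{\hat{p}}(\hat{\Lambda})=q^{-1}\hat{\Lambda},\quad \delta_{\hat{p}}(\hat{\Lambda})=0,\quad \sigma_{\hat{x}}(\hat{\Lambda})=q\hat{\Lambda},\quad \delta_{\hat{x}}(\hat{\Lambda})=0,\quad \sigma_{\hat{x}}(\hat{p})=q^{-1}\hat{p},\quad \delta_{\hat{x}}(\hat{p})=i\hbar q^{-1/2}\hat{\Lambda}; \] in particular these prescriptions define an automorphism $\sigma_{\hat{p}}$ of $\mathbb{C}[\hat{\Lambda}]$ with $\sigma_{\hat{p}}$-derivation $\delta_{\hat{p}}$, and an automorphism $\sigma_{\hat{x}}$ of $\mathbb{C}[\hat{\Lambda}][\hat{p};\sigma_{\hat{p}},\delta_{\hat{p}}]$ with $\sigma_{\hat{x}}$-derivation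 $\delta_{\hat{x}}$.
   Context: An Ore extension $A[t;\sigma,\delta]$ of a ring $A$, for a ring endomorphism $\sigma$ of $A$ and a $\sigma$-derivation $\delta$ of $A$ (i.e. $\delta(ab)=\sigma(a)\delta(b)+\delta(a)b$), is the ring of polynomials $\sum a_i t^i$ with multiplication determined by $ta=\sigma(a)t+\delta(a)$ for $a\in A$. The algebra above is the $q$-deformed Heisenberg algebra of Wess (position $\hat{x}$, momentum $\hat{p}$, auxiliary generator $\hat{\Lambda}$). *)

theory Defs
  imports "HOL-Algebra.QuotRing" Complex_Main
begin

definition C_ring :: "complex ring" where
  "C_ring = \<lparr>carrier = UNIV, mult = times, one = 1, zero = 0, add = (+)\<rparr>"

text \<open>An element of A[t;sigma,delta] is a finitely supported coefficient function
  f :: nat => A, standing for the polynomial sum_i (f i) t^i (coefficients on the left).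
  Multiplication is determined by t a = sigma(a) t + delta(a).\<close>

definition ore_supp :: "'a ring \<Rightarrow> (nat \<Rightarrow> 'a) \<Rightarrow> nat set" where
  "ore_supp R f = {i. f i \<noteq> \<zero>\<^bsub>R\<^esub>}"

text \<open>Coefficient function of the product t^n a (for a in A).\<close>
fun ore_tmul :: "'a ring \<Rightarrow> ('a \<Rightarrow> 'a) \<Rightarrow> ('a \<Rightarrow> 'a) \<Rightarrow> nat \<Rightarrow> 'a \<Rightarrow> nat \<Rightarrow> 'a" where
  "ore_tmul R \<sigma> \<delta> 0 a = (\<lambda>k. if k = 0 then a else \<zero>\<^bsub>R\<^esub>)"
| "ore_tmul R \<sigma> \<delta> (Suc n) a =
     (\<lambda>k. (if k = 0 then \<zero>\<^bsub>R\<^esub> else \<sigma> (ore_tmul R \<sigma> \<delta> n a (k - 1)))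
            \<oplus>\<^bsub>R\<^esub> \<delta> (ore_tmul R \<sigma> \<delta> n a k))"

text \<open>(sum_i f_i t^i)(sum_j g_j t^j) = sum_{i,j} f_i (t^i g_j) t^j.\<close>
definition ore_mult :: "'a ring \<Rightarrow> ('a \<Rightarrow> 'a) \<Rightarrow> ('a \<Rightarrow> 'a) \<Rightarrow>
    (nat \<Rightarrow> 'a) \<Rightarrow> (nat \<Rightarrow> 'a) \<Rightarrow> nat \<Rightarrow> 'a" where
  "ore_mult R \<sigma> \<delta> f g = (\<lambda>k. finsum R (\<lambda>i. finsum R (\<lambda>j.
       f i \<otimes>\<^bsub>R\<^esub> ore_tmul R \<sigma> \<delta> i (g j) (k - j)) {..k}) (ore_supp R f))"

definition ore_const :: "'a ring \<Rightarrow> 'a \<Rightarrow> nat \<Rightarrow> 'a" where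
  "ore_const R a = (\<lambda>k. if k = 0 then a else \<zero>\<^bsub>R\<^esub>)"

definition ore_var :: "'a ring \<Rightarrow> nat \<Rightarrow> 'a" where
  "ore_var R = (\<lambda>k. if k = 1 then \<one>\<^bsub>R\<^esub> else \<zero>\<^bsub>R\<^esub>)"

definition ore_ext :: "'a ring \<Rightarrow> ('a \<Rightarrow> 'a) \<Rightarrow> ('a \<Rightarrow> 'a) \<Rightarrow> (nat \<Rightarrow> 'a) ring" where
  "ore_ext R \<sigma> \<delta> =
     \<lparr>carrier = {f. (\<forall>i. f i \<in> carrier R) \<and> finite (ore_supp R f)},
      mult = ore_mult R \<sigma> \<delta>,
      one = ore_const R \<one>\<^bsub>R\<^esub>,
      zero = (\<lambda>k. \<zero>\<^bsub>R\<^esub>),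
      add = (\<lambda>f g k. f k \<oplus>\<^bsub>R\<^esub> g k)\<rparr>"

definition sigma_derivation :: "'a ring \<Rightarrow> ('a \<Rightarrow> 'a) \<Rightarrow> ('a \<Rightarrow> 'a) \<Rightarrow> bool" where
  "sigma_derivation R \<sigma> \<delta> \<longleftrightarrow>
     \<delta> \<in> carrier R \<rightarrow> carrier R \<and>
     (\<forall>a\<in>carrier R. \<forall>b\<in>carrier R.
        \<delta> (a \<oplus>\<^bsub>R\<^esub> b) = \<delta> a \<oplus>\<^bsub>R\<^esub> \<delta> b \<and>
        \<delta> (a \<otimes>\<^bsub>R\<^esub> b) = \<sigma> a \<otimes>\<^bsub>R\<^esub> \<delta> b \<oplus>\<^bsub>R\<^esub> \<delta> a \<otimes>\<^bsub>R\<^esub> b)"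

datatype hgen = GenX | GenP | GenL

definition free_alg :: "(hgen list \<Rightarrow> complex) ring" where
  "free_alg = \<lparr>carrier = {f. finite {w. f w \<noteq> 0}},
     mult = (\<lambda>f g w. \<Sum>i\<le>length w. f (take i w) * g (drop i w)),
     one = (\<lambda>w. if w = [] then 1 else 0),
     zero = (\<lambda>w. 0),
     add = (\<lambda>f g w. f w + g w)\<rparr>"

definition fa_scalar :: "complex \<Rightarrow> hgen list \<Rightarrow> complex" where
  "fa_scalar c = (\<lambda>w. if w = [] then c else 0)"

definition fa_gen :: "hgen \<Rightarrow> hgen list \<Rightarrow> complex" where
  "fa_gen g = (\<lambda>w. if w = [g] then 1 else 0)"

text \<open>q^(1/2) is taken as the principal complex square root of q; q^(-1/2) = 1 / q^(1/2).\<close>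
definition qhalf :: "real \<Rightarrow> complex" where
  "qhalf q = csqrt (complex_of_real q)"

definition heis_rels :: "real \<Rightarrow> real \<Rightarrow> (hgen list \<Rightarrow> complex) set" where
  "heis_rels q hbar =
    (let X = fa_gen GenX; P = fa_gen GenP; L = fa_gen GenL; s = qhalf q;
         m = mult free_alg in
     { (\<lambda>w. s * m X P w - (1 / s) * m P X w - \<i> * complex_of_real hbar * L w),
       (\<lambda>w. m L X w - complex_of_real (1 / q) * m X L w),
       (\<lambda>w. m L P w - complex_of_real q * m P L w) })"

definition Heis :: "real \<Rightarrow> real \<Rightarrow> (hgen list \<Rightarrow> complex) set ring" where
  "Heis q hbar = free_alg Quot (genideal free_alg (heis_rels q hbar))"

definition heis_class :: "real \<Rightarrow> real \<Rightarrow> (hgen list \<Rightarrow> complex) \<Rightarrow> (hgen list \<Rightarrow> complex) set" where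
  "heis_class q hbar f = genideal free_alg (heis_rels q hbar) +>\<^bsub>free_alg\<^esub> f"

end

theory Submission
  imports Defs "HOL-Library.Function_Algebras"
begin

text \<open>An element of A[t; sigma, delta] is a finitely supported coefficient function, and left
  multiplication by t acts on coefficient functions by the additive operator
  T m = sigma(m shifted by one) + delta(m). The product is (f g)_k = sum_i f_i (T^i g)_k, and
  associativity reduces to T (f g) = (T f) g, which is the sigma-Leibniz rule for delta; hence
  every Ore extension is a ring. In the tower C[Lambda] < C[Lambda][p] < C[Lambda][p][x] the maps
  sigma_p, sigma_x, delta_x act on coefficients by explicit formulas: sigma_x is an automorphism,
  and the Leibniz rule for delta_x amounts to the additivity of the q-integers
  [n] = sum_(j<n) q^(-2j), since delta_x(Lambda^a p^b) = kappa q^a [b] Lambda^(a+1) p^(b-1).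

  The algebra homomorphism from the free algebra on x, p, Lambda to C[Lambda][p][x] that sends
  generators to generators kills the three relations and is onto. Conversely, modulo the relations
  every word can be rewritten into a combination of normal-ordered words Lambda^a p^b x^c, which are
  mapped to the monomial basis; so the kernel is exactly the ideal of relations, and the first
  isomorphism theorem identifies the presented algebra with the iterated Ore extension.\<close>

section \<open>Ore extensions of rings carried by an additive group type\<close>

definition vanishes_above :: "nat \<Rightarrow> (nat \<Rightarrow> 'a::zero) \<Rightarrow> bool" where
  "vanishes_above n f \<longleftrightarrow> (\<forall>k>n. f k = 0)"

lemma vanishes_above_mono: "vanishes_above n f \<Longrightarrow> n \<le> m \<Longrightarrow> vanishes_above m f"
  unfolding vanishes_above_def by auto

lemma finite_support_iff_vanishes_above:
  "finite {k. f k \<noteq> (0::'a::zero)} \<longleftrightarrow> (\<exists>n. vanishes_above n f)"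
proof
  assume "finite {k. f k \<noteq> 0}"
  then obtain n where "\<forall>k\<in>{k. f k \<noteq> 0}. k \<le> n"
    using finite_nat_set_iff_bounded_le by blast
  then show "\<exists>n. vanishes_above n f"
    unfolding vanishes_above_def by (auto simp: not_le[symmetric])
next
  assume "\<exists>n. vanishes_above n f"
  then obtain n where "vanishes_above n f" ..
  then have "{k. f k \<noteq> 0} \<subseteq> {..n}"
    unfolding vanishes_above_def by (auto simp: not_less[symmetric])
  then show "finite {k. f k \<noteq> 0}" by (rule finite_subset) simp
qed

lemma sum_atMost_vanishes_above:
  fixes f :: "nat \<Rightarrow> 'a::comm_ring_1"
  assumes "vanishes_above N f" "N \<le> M"
  shows "(\<Sum>i\<le>N. f i * h i) = (\<Sum>i\<le>M. f i * h i)"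
  by (rule sum.mono_neutral_left) (use assms in \<open>auto simp: vanishes_above_def\<close>)

text \<open>The coefficient function of t m, for m the coefficient function of an element of
  A[t;sigma,delta]: this is the rule t a = sigma(a) t + delta(a) applied coefficientwise.\<close>
definition ore_var_mult ::
    "('a \<Rightarrow> 'a) \<Rightarrow> ('a \<Rightarrow> 'a) \<Rightarrow> (nat \<Rightarrow> 'a::ab_group_add) \<Rightarrow> nat \<Rightarrow> 'a" where
  "ore_var_mult \<sigma> \<delta> m = (\<lambda>k. (if k = 0 then 0 else \<sigma> (m (k - 1))) + \<delta> (m k))"

text \<open>ore_ext adds coefficient functions with the addition of the coefficient ring. When that is
  the addition of the carrier type, elements of ore_ext A sigma delta are added and summed with the
  type's own + and sum, which is what makes coefficientwise reasoning convenient.\<close>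
locale type_add_ring = ring A for A :: "'a::ab_group_add ring" (structure) +
  assumes add_eq_plus: "add A = (+)" and zero_eq_0: "zero A = 0"
begin

lemma add_eq[simp]: "x \<oplus> y = x + y"
  by (simp add: add_eq_plus)

lemma zero_eq[simp]: "\<zero> = 0"
  by (simp add: zero_eq_0)

lemma plus_closed[intro, simp]: "x \<in> carrier A \<Longrightarrow> y \<in> carrier A \<Longrightarrow> x + y \<in> carrier A"
  using a_closed[of x y] by simp

lemma zero_mem[intro, simp]: "0 \<in> carrier A"
  using zero_closed by simp

lemma a_inv_eq_uminus: "x \<in> carrier A \<Longrightarrow> \<ominus> x = - x"
  using r_neg[of x] by (simp add: add_eq_0_iff)

lemma uminus_closed[intro, simp]: "x \<in> carrier A \<Longrightarrow> - x \<in> carrier A"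
  using a_inv_closed[of x] a_inv_eq_uminus[of x] by simp

lemma diff_closed[intro, simp]: "x \<in> carrier A \<Longrightarrow> y \<in> carrier A \<Longrightarrow> x - y \<in> carrier A"
  by (metis plus_closed uminus_closed diff_conv_add_uminus)

lemma sum_closed[intro]: "(\<And>i. i \<in> S \<Longrightarrow> f i \<in> carrier A) \<Longrightarrow> sum f S \<in> carrier A"
  by (induct S rule: infinite_finite_induct) auto

lemma finsum_eq_sum: "f \<in> S \<rightarrow> carrier A \<Longrightarrow> finsum A f S = sum f S"
  by (induct S rule: infinite_finite_induct) (auto simp: finsum_insert)

lemma mult_0_left[simp]: "x \<in> carrier A \<Longrightarrow> 0 \<otimes> x = 0"
  using l_null[of x] by simp

lemma mult_0_right[simp]: "x \<in> carrier A \<Longrightarrow> x \<otimes> 0 = 0"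
  using r_null[of x] by simp

lemma mult_plus_right:
  "a \<in> carrier A \<Longrightarrow> x \<in> carrier A \<Longrightarrow> y \<in> carrier A \<Longrightarrow> a \<otimes> (x + y) = a \<otimes> x + a \<otimes> y"
  using r_distr[of x y a] by simp

lemma mult_plus_left:
  "a \<in> carrier A \<Longrightarrow> x \<in> carrier A \<Longrightarrow> y \<in> carrier A \<Longrightarrow> (x + y) \<otimes> a = x \<otimes> a + y \<otimes> a"
  using l_distr[of x y a] by simp

lemma mult_sum_right:
  "a \<in> carrier A \<Longrightarrow> (\<And>i. i \<in> S \<Longrightarrow> f i \<in> carrier A) \<Longrightarrow> a \<otimes> sum f S = (\<Sum>i\<in>S. a \<otimes> f i)"
proof (induct S rule: infinite_finite_induct)
  case (insert x F)
  then show ?case using mult_plus_right[of a "f x" "sum f F"] sum_closed[of F f] by simp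
qed auto

lemma mult_sum_left:
  "a \<in> carrier A \<Longrightarrow> (\<And>i. i \<in> S \<Longrightarrow> f i \<in> carrier A) \<Longrightarrow> sum f S \<otimes> a = (\<Sum>i\<in>S. f i \<otimes> a)"
proof (induct S rule: infinite_finite_induct)
  case (insert x F)
  then show ?case using mult_plus_left[of a "f x" "sum f F"] sum_closed[of F f] by simp
qed auto

end

lemma type_add_ringI: "ring A \<Longrightarrow> add A = (+) \<Longrightarrow> zero A = 0 \<Longrightarrow> type_add_ring A"
  by (simp add: type_add_ring_def type_add_ring_axioms_def)

locale ore_data = type_add_ring A for A :: "'a::ab_group_add ring" (structure) +
  fixes \<sigma> \<delta> :: "'a \<Rightarrow> 'a"
  assumes sigma_hom: "\<sigma> \<in> ring_hom A A" and sigma_derivation: "sigma_derivation A \<sigma> \<delta>"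
begin

lemma sigma_closed[simp]: "x \<in> carrier A \<Longrightarrow> \<sigma> x \<in> carrier A"
  by (rule ring_hom_closed[OF sigma_hom])

lemma sigma_add: "x \<in> carrier A \<Longrightarrow> y \<in> carrier A \<Longrightarrow> \<sigma> (x + y) = \<sigma> x + \<sigma> y"
  using ring_hom_add[OF sigma_hom, of x y] by simp

lemma sigma_mult: "x \<in> carrier A \<Longrightarrow> y \<in> carrier A \<Longrightarrow> \<sigma> (x \<otimes> y) = \<sigma> x \<otimes> \<sigma> y"
  by (rule ring_hom_mult[OF sigma_hom])

lemma sigma_zero[simp]: "\<sigma> 0 = 0"
  using sigma_add[of 0 0] by simp

lemma sigma_sum: "(\<And>i. i \<in> S \<Longrightarrow> f i \<in> carrier A) \<Longrightarrow> \<sigma> (sum f S) = (\<Sum>i\<in>S. \<sigma> (f i))"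
proof (induct S rule: infinite_finite_induct)
  case (insert x F)
  then show ?case using sigma_add[of "f x" "sum f F"] sum_closed[of F f] by simp
qed simp_all

lemma delta_closed: "x \<in> carrier A \<Longrightarrow> \<delta> x \<in> carrier A"
  using sigma_derivation unfolding sigma_derivation_def by blast

lemma delta_add: "x \<in> carrier A \<Longrightarrow> y \<in> carrier A \<Longrightarrow> \<delta> (x + y) = \<delta> x + \<delta> y"
  using sigma_derivation unfolding sigma_derivation_def by simp

lemma delta_mult:
  "x \<in> carrier A \<Longrightarrow> y \<in> carrier A \<Longrightarrow> \<delta> (x \<otimes> y) = \<sigma> x \<otimes> \<delta> y + \<delta> x \<otimes> y"
  using sigma_derivation unfolding sigma_derivation_def by simp

lemma delta_zero: "\<delta> 0 = 0"
  using delta_add[of 0 0] by simp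

lemma delta_one: "\<delta> \<one> = 0"
  using delta_mult[of \<one> \<one>] by (simp add: ring_hom_one[OF sigma_hom] delta_closed)

lemma delta_sum: "(\<And>i. i \<in> S \<Longrightarrow> f i \<in> carrier A) \<Longrightarrow> \<delta> (sum f S) = (\<Sum>i\<in>S. \<delta> (f i))"
proof (induct S rule: infinite_finite_induct)
  case (insert x F)
  then show ?case using delta_add[of "f x" "sum f F"] sum_closed[of F f] by simp
qed (simp_all add: delta_zero)

abbreviation "E \<equiv> ore_ext A \<sigma> \<delta>"
abbreviation "T \<equiv> ore_var_mult \<sigma> \<delta>"

lemma ore_ext_carrier: "carrier E = {f. (\<forall>i. f i \<in> carrier A) \<and> (\<exists>n. vanishes_above n f)}"
  unfolding ore_ext_def ore_supp_def by (simp add: finite_support_iff_vanishes_above)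

lemma ore_ext_add[simp]: "add E = (+)"
  unfolding ore_ext_def by (auto simp: fun_eq_iff)

lemma ore_ext_zero[simp]: "zero E = 0"
  unfolding ore_ext_def by (auto simp: fun_eq_iff)

lemma ore_ext_one: "one E = ore_const A \<one>"
  unfolding ore_ext_def by simp

lemma ore_const_eq: "ore_const A a = (\<lambda>k. if k = 0 then a else 0)"
  unfolding ore_const_def by (simp add: fun_eq_iff)

lemma ore_var_eq: "ore_var A = (\<lambda>k. if k = 1 then \<one> else 0)"
  unfolding ore_var_def by (simp add: fun_eq_iff)

lemma ore_extI: "(\<And>i. f i \<in> carrier A) \<Longrightarrow> vanishes_above n f \<Longrightarrow> f \<in> carrier E"
  unfolding ore_ext_carrier by blast

lemma ore_ext_coeff_closed: "f \<in> carrier E \<Longrightarrow> f i \<in> carrier A"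
  unfolding ore_ext_carrier by blast

lemma ore_ext_vanishes_above: "f \<in> carrier E \<Longrightarrow> \<exists>n. vanishes_above n f"
  unfolding ore_ext_carrier by blast

lemma T_eq: "T m k = (if k = 0 then 0 else \<sigma> (m (k - 1))) + \<delta> (m k)"
  unfolding ore_var_mult_def by simp

lemma T_pow_Suc: "(T ^^ Suc i) m = T ((T ^^ i) m)"
  by simp

lemma T_pow_closed: "(\<And>i. m i \<in> carrier A) \<Longrightarrow> (T ^^ n) m k \<in> carrier A"
  by (induct n arbitrary: k) (auto simp: T_eq delta_closed)

lemma T_vanishes_above: "vanishes_above n m \<Longrightarrow> vanishes_above (Suc n) (T m)"
  unfolding vanishes_above_def T_eq by (auto simp: delta_zero)

lemma T_pow_vanishes_above: "vanishes_above n m \<Longrightarrow> vanishes_above (n + i) ((T ^^ i) m)"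
  by (induct i) (auto simp: T_vanishes_above)

lemma T_pow_closed_ore_ext: "f \<in> carrier E \<Longrightarrow> (T ^^ i) f \<in> carrier E"
proof -
  assume f: "f \<in> carrier E"
  then obtain n where "vanishes_above n f" using ore_ext_vanishes_above by blast
  then show ?thesis
    using ore_ext_coeff_closed[OF f] by (intro ore_extI[of _ "n + i"] T_pow_closed
      T_pow_vanishes_above)
qed

lemma T_closed_ore_ext: "f \<in> carrier E \<Longrightarrow> T f \<in> carrier E"
  using T_pow_closed_ore_ext[of f 1] by simp

lemma T_add: "(\<And>i. m i \<in> carrier A) \<Longrightarrow> (\<And>i. m' i \<in> carrier A) \<Longrightarrow> T (m + m') = T m + T m'"
  by (auto simp: fun_eq_iff T_eq sigma_add delta_add algebra_simps)

lemma T_pow_add: "(\<And>i. m i \<in> carrier A) \<Longrightarrow> (\<And>i. m' i \<in> carrier A) \<Longrightarrow>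
   (T ^^ n) (m + m') = (T ^^ n) m + (T ^^ n) m'"
  by (induct n) (auto simp: T_add T_pow_closed)

lemma ore_tmul_Suc: "ore_tmul A \<sigma> \<delta> (Suc n) a = (\<lambda>k.
    (if k = 0 then 0 else \<sigma> (ore_tmul A \<sigma> \<delta> n a (k - 1))) + \<delta> (ore_tmul A \<sigma> \<delta> n a k))"
  by (simp only: ore_tmul.simps zero_eq add_eq)

lemma ore_tmul_eq_T_pow: "ore_tmul A \<sigma> \<delta> n a = (T ^^ n) (ore_const A a)"
  by (induct n) (auto simp: ore_const_def ore_var_mult_def fun_eq_iff)

lemma T_pow_eq_sum_ore_tmul: "(\<And>j. g j \<in> carrier A) \<Longrightarrow>
   (T ^^ i) g k = (\<Sum>j\<le>k. ore_tmul A \<sigma> \<delta> i (g j) (k - j))"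
proof (induct i arbitrary: k)
  case 0
  have "(\<Sum>j\<le>k. ore_tmul A \<sigma> \<delta> 0 (g j) (k - j)) = (\<Sum>j\<le>k. if j = k then g j else 0)"
    by (rule sum.cong) auto
  then show ?case by simp
next
  case (Suc i)
  have closed: "ore_tmul A \<sigma> \<delta> i (g j) m \<in> carrier A" for j m
    unfolding ore_tmul_eq_T_pow using Suc.prems by (intro T_pow_closed) (simp add: ore_const_eq)
  have shifted: "(\<Sum>j\<le>k. if k - j = 0 then 0 else \<sigma> (ore_tmul A \<sigma> \<delta> i (g j) (k - j - 1)))
      = (if k = 0 then 0 else \<sigma> ((T ^^ i) g (k - 1)))"
  proof (cases k)
    case (Suc k')
    have "(\<Sum>j\<le>k. if k - j = 0 then 0 else \<sigma> (ore_tmul A \<sigma> \<delta> i (g j) (k - j - 1)))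
       = (\<Sum>j\<le>k'. \<sigma> (ore_tmul A \<sigma> \<delta> i (g j) (k' - j)))"
      unfolding Suc by (simp add: Suc_diff_le)
    then show ?thesis using Suc by (simp add: Suc.hyps Suc.prems sigma_sum closed)
  qed simp
  have "(\<Sum>j\<le>k. ore_tmul A \<sigma> \<delta> (Suc i) (g j) (k - j)) =
     (\<Sum>j\<le>k. if k - j = 0 then 0 else \<sigma> (ore_tmul A \<sigma> \<delta> i (g j) (k - j - 1)))
     + (\<Sum>j\<le>k. \<delta> (ore_tmul A \<sigma> \<delta> i (g j) (k - j)))"
    by (simp add: sum.distrib ore_tmul_Suc del: ore_tmul.simps)
  also have "\<dots> = (T ^^ Suc i) g k"
    unfolding shifted by (simp add: T_eq Suc.hyps Suc.prems delta_sum closed)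
  finally show ?case ..
qed

lemma ore_mult_expand:
  assumes f: "f \<in> carrier E" and g: "g \<in> carrier E" and N: "vanishes_above N f"
  shows "f \<otimes>\<^bsub>E\<^esub> g = (\<lambda>k. \<Sum>i\<le>N. f i \<otimes> (T ^^ i) g k)"
proof
  fix k
  have fi: "f i \<in> carrier A" and gj: "g j \<in> carrier A" for i j
    using f g by (auto intro: ore_ext_coeff_closed)
  have tmul_closed: "ore_tmul A \<sigma> \<delta> i (g j) m \<in> carrier A" for i j m
    unfolding ore_tmul_eq_T_pow by (intro T_pow_closed) (simp add: ore_const_eq gj)
  have inner: "finsum A (\<lambda>j. f i \<otimes> ore_tmul A \<sigma> \<delta> i (g j) (k - j)) {..k} = f i \<otimes> (T ^^ i) g k"
    for i
    by (simp add: finsum_eq_sum fi tmul_closed mult_sum_right T_pow_eq_sum_ore_tmul gj)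
  have "(f \<otimes>\<^bsub>E\<^esub> g) k = finsum A (\<lambda>i. f i \<otimes> (T ^^ i) g k) (ore_supp A f)"
    unfolding ore_ext_def ore_mult_def using inner by simp
  also have "\<dots> = (\<Sum>i\<in>ore_supp A f. f i \<otimes> (T ^^ i) g k)"
    by (rule finsum_eq_sum) (auto intro!: m_closed fi T_pow_closed gj)
  also have "\<dots> = (\<Sum>i\<le>N. f i \<otimes> (T ^^ i) g k)"
  proof (rule sum.mono_neutral_left)
    show "ore_supp A f \<subseteq> {..N}"
      using N unfolding vanishes_above_def ore_supp_def by (auto simp: not_less[symmetric])
  qed (auto simp: ore_supp_def T_pow_closed gj)
  finally show "(f \<otimes>\<^bsub>E\<^esub> g) k = (\<Sum>i\<le>N. f i \<otimes> (T ^^ i) g k)" .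
qed

lemma ore_mult_vanishes_above:
  assumes f: "f \<in> carrier E" and g: "g \<in> carrier E"
    and N: "vanishes_above N f" and M: "vanishes_above M g"
  shows "vanishes_above (N + M) (f \<otimes>\<^bsub>E\<^esub> g)"
  unfolding vanishes_above_def
proof (intro allI impI)
  fix k assume k: "N + M < k"
  have "(T ^^ i) g k = 0" if "i \<le> N" for i
    using T_pow_vanishes_above[OF M, of i] k that
    unfolding vanishes_above_def by auto
  then show "(f \<otimes>\<^bsub>E\<^esub> g) k = 0"
    unfolding ore_mult_expand[OF f g N] using ore_ext_coeff_closed[OF f] by simp
qed

lemma ore_mult_closed: "f \<in> carrier E \<Longrightarrow> g \<in> carrier E \<Longrightarrow> f \<otimes>\<^bsub>E\<^esub> g \<in> carrier E"
proof -
  assume f: "f \<in> carrier E" and g: "g \<in> carrier E"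
  obtain N M where N: "vanishes_above N f" and M: "vanishes_above M g"
    using ore_ext_vanishes_above f g by blast
  show ?thesis
  proof (rule ore_extI)
    show "vanishes_above (N + M) (f \<otimes>\<^bsub>E\<^esub> g)" by (rule ore_mult_vanishes_above[OF f g N M])
    show "(f \<otimes>\<^bsub>E\<^esub> g) i \<in> carrier A" for i
      unfolding ore_mult_expand[OF f g N]
      by (auto intro!: sum_closed m_closed ore_ext_coeff_closed[OF f] T_pow_closed
          ore_ext_coeff_closed[OF g])
  qed
qed

text \<open>Expanding both sides, this is exactly the sigma-derivation rule for delta.\<close>
lemma T_ore_mult:
  assumes f: "f \<in> carrier E" and g: "g \<in> carrier E"
  shows "T (f \<otimes>\<^bsub>E\<^esub> g) = T f \<otimes>\<^bsub>E\<^esub> g"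
proof
  fix k
  obtain N where N: "vanishes_above N f" using ore_ext_vanishes_above f by blast
  have N1: "vanishes_above (Suc N) (T f)" using T_vanishes_above[OF N] .
  define W where "W i = (T ^^ i) g" for i
  have fi: "\<And>i. f i \<in> carrier A" using f by (rule ore_ext_coeff_closed)
  have Wc: "\<And>i k. W i k \<in> carrier A" unfolding W_def using ore_ext_coeff_closed[OF g]
    by (rule T_pow_closed)
  have WS: "W (Suc i) k = (if k = 0 then 0 else \<sigma> (W i (k - 1))) + \<delta> (W i k)" for i k
    unfolding W_def by (simp add: T_eq)
  have fS: "f (Suc N) = 0" using N unfolding vanishes_above_def by auto
  have "T (f \<otimes>\<^bsub>E\<^esub> g) k = (if k = 0 then 0 else (\<Sum>i\<le>N. \<sigma> (f i) \<otimes> \<sigma> (W i (k - 1))))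
        + ((\<Sum>i\<le>N. \<sigma> (f i) \<otimes> \<delta> (W i k)) + (\<Sum>i\<le>N. \<delta> (f i) \<otimes> W i k))"
    unfolding T_eq ore_mult_expand[OF f g N] W_def[symmetric]
    using fi Wc by (simp add: sigma_sum delta_sum sigma_mult delta_mult sum.distrib)
  also have "\<dots> = (\<Sum>i\<le>N. \<sigma> (f i) \<otimes> W (Suc i) k) + (\<Sum>i\<le>N. \<delta> (f i) \<otimes> W i k)"
    unfolding WS using fi Wc by (simp add: mult_plus_right sum.distrib add.assoc delta_closed)
  also have "\<dots> = (\<Sum>i\<le>Suc N. (if i = 0 then 0 else \<sigma> (f (i - 1))) \<otimes> W i k)
      + (\<Sum>i\<le>Suc N. \<delta> (f i) \<otimes> W i k)"
  proof -
    have "(\<Sum>i\<le>Suc N. (if i = 0 then 0 else \<sigma> (f (i - 1))) \<otimes> W i k)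
        = (\<Sum>i\<le>N. \<sigma> (f i) \<otimes> W (Suc i) k)"
      unfolding sum.atMost_Suc_shift using Wc by simp
    moreover have "(\<Sum>i\<le>Suc N. \<delta> (f i) \<otimes> W i k) = (\<Sum>i\<le>N. \<delta> (f i) \<otimes> W i k)"
      using fS Wc by (simp add: delta_zero)
    ultimately show ?thesis by simp
  qed
  also have "\<dots> = (\<Sum>i\<le>Suc N. T f i \<otimes> W i k)"
    using fi Wc by (simp add: T_eq mult_plus_left sum.distrib delta_closed)
  also have "\<dots> = (T f \<otimes>\<^bsub>E\<^esub> g) k"
    unfolding ore_mult_expand[OF T_closed_ore_ext[OF f] g N1] W_def ..
  finally show "T (f \<otimes>\<^bsub>E\<^esub> g) k = (T f \<otimes>\<^bsub>E\<^esub> g) k" .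
qed

lemma T_pow_ore_mult:
  "f \<in> carrier E \<Longrightarrow> g \<in> carrier E \<Longrightarrow> (T ^^ i) (f \<otimes>\<^bsub>E\<^esub> g) = (T ^^ i) f \<otimes>\<^bsub>E\<^esub> g"
proof (induct i arbitrary: f)
  case (Suc i)
  then show ?case
    by (simp only: funpow_Suc_right comp_def T_ore_mult T_closed_ore_ext)
qed simp

lemma ore_mult_assoc:
  assumes f: "f \<in> carrier E" and g: "g \<in> carrier E" and h: "h \<in> carrier E"
  shows "(f \<otimes>\<^bsub>E\<^esub> g) \<otimes>\<^bsub>E\<^esub> h = f \<otimes>\<^bsub>E\<^esub> (g \<otimes>\<^bsub>E\<^esub> h)"
proof
  fix k
  obtain N M where N: "vanishes_above N f" and M: "vanishes_above M g"
    using ore_ext_vanishes_above f g by blast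
  have fi: "\<And>i. f i \<in> carrier A" using f by (rule ore_ext_coeff_closed)
  have Wg: "\<And>i k. (T ^^ i) g k \<in> carrier A" using ore_ext_coeff_closed[OF g] by (rule T_pow_closed)
  have Wh: "\<And>i k. (T ^^ i) h k \<in> carrier A" using ore_ext_coeff_closed[OF h] by (rule T_pow_closed)
  have bound: "vanishes_above (N + M) ((T ^^ i) g)" if "i \<le> N" for i
    using T_pow_vanishes_above[OF M, of i] that
    by (auto intro: vanishes_above_mono)
  have "(f \<otimes>\<^bsub>E\<^esub> (g \<otimes>\<^bsub>E\<^esub> h)) k = (\<Sum>i\<le>N. f i \<otimes> ((T ^^ i) g \<otimes>\<^bsub>E\<^esub> h) k)"
    unfolding ore_mult_expand[OF f ore_mult_closed[OF g h] N] T_pow_ore_mult[OF g h] ..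
  also have "\<dots> = (\<Sum>i\<le>N. \<Sum>l\<le>N + M. f i \<otimes> ((T ^^ i) g l \<otimes> (T ^^ l) h k))"
    using fi Wg Wh
    by (simp add: ore_mult_expand[OF T_pow_closed_ore_ext[OF g] h bound] mult_sum_right)
  also have "\<dots> = (\<Sum>l\<le>N + M. (\<Sum>i\<le>N. f i \<otimes> (T ^^ i) g l) \<otimes> (T ^^ l) h k)"
    using fi Wg Wh by (simp add: sum.swap[of _ "{..N}"] mult_sum_left m_assoc)
  also have "\<dots> = ((f \<otimes>\<^bsub>E\<^esub> g) \<otimes>\<^bsub>E\<^esub> h) k"
    unfolding ore_mult_expand[OF ore_mult_closed[OF f g] h ore_mult_vanishes_above[OF f g N M]]
    unfolding ore_mult_expand[OF f g N] ..
  finally show "((f \<otimes>\<^bsub>E\<^esub> g) \<otimes>\<^bsub>E\<^esub> h) k = (f \<otimes>\<^bsub>E\<^esub> (g \<otimes>\<^bsub>E\<^esub> h)) k" ..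
qed

lemma ore_const_closed: "a \<in> carrier A \<Longrightarrow> ore_const A a \<in> carrier E"
  by (rule ore_extI[of _ 0]) (auto simp: vanishes_above_def ore_const_eq)

lemma ore_const_mult: "a \<in> carrier A \<Longrightarrow> g \<in> carrier E \<Longrightarrow> ore_const A a \<otimes>\<^bsub>E\<^esub> g = (\<lambda>k. a \<otimes> g k)"
  by (subst ore_mult_expand[OF ore_const_closed _ , of _ _ 0])
    (auto simp: ore_const_eq vanishes_above_def)

lemma T_pow_ore_const_central:
  assumes "\<sigma> s = s" and "\<delta> s = 0"
  shows "(T ^^ i) (ore_const A s) = (\<lambda>k. if k = i then s else 0)"
  by (induct i) (auto simp: ore_const_eq T_eq fun_eq_iff assms delta_zero)

lemma ore_const_central:
  assumes s: "s \<in> carrier A" and ss: "\<sigma> s = s" and ds: "\<delta> s = 0"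
    and central: "\<And>a. a \<in> carrier A \<Longrightarrow> a \<otimes> s = s \<otimes> a" and f: "f \<in> carrier E"
  shows "f \<otimes>\<^bsub>E\<^esub> ore_const A s = ore_const A s \<otimes>\<^bsub>E\<^esub> f"
proof
  fix k
  obtain N where N: "vanishes_above N f" using ore_ext_vanishes_above f by blast
  have "(f \<otimes>\<^bsub>E\<^esub> ore_const A s) k = (\<Sum>i\<le>N. if i = k then f k \<otimes> s else 0)"
    unfolding ore_mult_expand[OF f ore_const_closed[OF s] N] T_pow_ore_const_central[OF ss ds]
    using ore_ext_coeff_closed[OF f] by (intro sum.cong) auto
  also have "\<dots> = f k \<otimes> s"
    using N s ore_ext_coeff_closed[OF f] unfolding vanishes_above_def by (auto simp: not_less)
  also have "\<dots> = (ore_const A s \<otimes>\<^bsub>E\<^esub> f) k"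
    unfolding ore_const_mult[OF s f] using central ore_ext_coeff_closed[OF f] by simp
  finally show "(f \<otimes>\<^bsub>E\<^esub> ore_const A s) k = (ore_const A s \<otimes>\<^bsub>E\<^esub> f) k" .
qed

lemma ore_var_closed: "ore_var A \<in> carrier E"
  by (rule ore_extI[of _ 1]) (auto simp: vanishes_above_def ore_var_eq)

lemma ore_var_mult_eq: "g \<in> carrier E \<Longrightarrow> ore_var A \<otimes>\<^bsub>E\<^esub> g = T g"
  by (subst ore_mult_expand[OF ore_var_closed _, of _ 1])
    (auto simp: vanishes_above_def ore_var_eq fun_eq_iff T_eq ore_ext_coeff_closed delta_closed)

lemma abelian_group_ore_ext: "abelian_group E"
proof (rule abelian_groupI)
  fix x y assume x: "x \<in> carrier E" and y: "y \<in> carrier E"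
  obtain n m where "vanishes_above n x" "vanishes_above m y"
    using ore_ext_vanishes_above x y by blast
  then have "vanishes_above (max n m) (x + y)" unfolding vanishes_above_def by auto
  then show "x \<oplus>\<^bsub>E\<^esub> y \<in> carrier E"
    using ore_ext_coeff_closed[OF x] ore_ext_coeff_closed[OF y] by (intro ore_extI) auto
  show "x \<oplus>\<^bsub>E\<^esub> y = y \<oplus>\<^bsub>E\<^esub> x" by (simp add: add.commute)
next
  fix x assume x: "x \<in> carrier E"
  obtain n where "vanishes_above n x" using ore_ext_vanishes_above x by blast
  then have "- x \<in> carrier E"
    using ore_ext_coeff_closed[OF x] by (intro ore_extI[of _ n]) (auto simp: vanishes_above_def)
  then show "\<exists>y\<in>carrier E. y \<oplus>\<^bsub>E\<^esub> x = \<zero>\<^bsub>E\<^esub>" by (intro bexI[of _ "- x"]) auto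
qed (auto intro: ore_extI[of _ 0] simp: vanishes_above_def add.assoc)

lemma monoid_ore_ext: "monoid E"
proof (rule monoidI)
  fix x assume x: "x \<in> carrier E"
  obtain N where N: "vanishes_above N x" using ore_ext_vanishes_above x by blast
  have "(T ^^ i) (ore_const A \<one>) = (\<lambda>k. if k = i then \<one> else 0)" for i
    by (rule T_pow_ore_const_central) (simp_all add: ring_hom_one[OF sigma_hom] delta_one)
  then have "(x \<otimes>\<^bsub>E\<^esub> \<one>\<^bsub>E\<^esub>) k = (\<Sum>i\<le>N. if i = k then x k else 0)" for k
    unfolding ore_ext_one ore_mult_expand[OF x ore_const_closed[OF one_closed] N]
    using ore_ext_coeff_closed[OF x] by (intro sum.cong) auto
  then show "x \<otimes>\<^bsub>E\<^esub> \<one>\<^bsub>E\<^esub> = x"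
    using N unfolding vanishes_above_def by (auto simp: not_less fun_eq_iff)
  show "\<one>\<^bsub>E\<^esub> \<otimes>\<^bsub>E\<^esub> x = x"
    unfolding ore_ext_one ore_const_mult[OF one_closed x] using ore_ext_coeff_closed[OF x] by simp
qed (auto simp: ore_ext_one ore_const_closed ore_mult_closed ore_mult_assoc)

lemma ring_ore_ext: "ring E"
proof (rule ringI[OF abelian_group_ore_ext monoid_ore_ext])
  fix x y z assume x: "x \<in> carrier E" and y: "y \<in> carrier E" and z: "z \<in> carrier E"
  obtain n m p where n: "vanishes_above n x" and m: "vanishes_above m y" and p: "vanishes_above p z"
    using ore_ext_vanishes_above x y z by meson
  have xy: "x + y \<in> carrier E" "vanishes_above (max n m) (x + y)"
    using n m ore_ext_coeff_closed[OF x] ore_ext_coeff_closed[OF y]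
    by (auto intro!: ore_extI[of _ "max n m"] simp: vanishes_above_def)
  show "(x \<oplus>\<^bsub>E\<^esub> y) \<otimes>\<^bsub>E\<^esub> z = x \<otimes>\<^bsub>E\<^esub> z \<oplus>\<^bsub>E\<^esub> y \<otimes>\<^bsub>E\<^esub> z"
    unfolding ore_ext_add ore_mult_expand[OF xy(1) z xy(2)]
      ore_mult_expand[OF x z vanishes_above_mono[OF n max.cobounded1[of n m]]]
      ore_mult_expand[OF y z vanishes_above_mono[OF m max.cobounded2[of m n]]]
    using ore_ext_coeff_closed[OF x] ore_ext_coeff_closed[OF y]
      T_pow_closed[OF ore_ext_coeff_closed[OF z]]
    by (auto simp: fun_eq_iff mult_plus_left sum.distrib)
  show "z \<otimes>\<^bsub>E\<^esub> (x \<oplus>\<^bsub>E\<^esub> y) = z \<otimes>\<^bsub>E\<^esub> x \<oplus>\<^bsub>E\<^esub> z \<otimes>\<^bsub>E\<^esub> y"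
    unfolding ore_ext_add ore_mult_expand[OF z xy(1) p] ore_mult_expand[OF z x p]
      ore_mult_expand[OF z y p] T_pow_add[OF ore_ext_coeff_closed[OF x] ore_ext_coeff_closed[OF y]]
    using ore_ext_coeff_closed[OF z] T_pow_closed[OF ore_ext_coeff_closed[OF x]]
      T_pow_closed[OF ore_ext_coeff_closed[OF y]]
    by (auto simp: fun_eq_iff mult_plus_right sum.distrib)
qed

lemma type_add_ring_ore_ext: "type_add_ring E"
  by (rule type_add_ringI[OF ring_ore_ext ore_ext_add ore_ext_zero])

end

lemma ore_dataI:
  "type_add_ring A \<Longrightarrow> \<sigma> \<in> ring_hom A A \<Longrightarrow> sigma_derivation A \<sigma> \<delta> \<Longrightarrow> ore_data A \<sigma> \<delta>"
  by (simp add: ore_data_def ore_data_axioms_def)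

section \<open>The tower C[Lambda] < C[Lambda][p] < C[Lambda][p][x]\<close>

lemma sum_fun_apply: "sum f A x = (\<Sum>i\<in>A. f i x)"
  by (induct A rule: infinite_finite_induct) auto

context type_add_ring
begin

lemma sigma_derivation_zero: "\<sigma> \<in> carrier A \<rightarrow> carrier A \<Longrightarrow> sigma_derivation A \<sigma> (\<lambda>_. 0)"
  unfolding sigma_derivation_def by (simp add: Pi_iff)

end

context ore_data
begin

lemma ore_ext_carrier_bounded:
  assumes carrier: "carrier A = {x. \<exists>n. B n x}"
    and mono: "\<And>n m x. B n x \<Longrightarrow> n \<le> m \<Longrightarrow> B m x" and zero: "\<And>n. B n 0"
  shows "carrier E = {f. \<exists>n. vanishes_above n f \<and> (\<forall>i. B n (f i))}"
proof (rule equalityI; rule subsetI)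
  fix f assume "f \<in> carrier E"
  then obtain N where N: "vanishes_above N f" and "\<And>i. \<exists>n. B n (f i)"
    unfolding ore_ext_carrier carrier by auto
  then obtain nb where nb: "\<And>i. B (nb i) (f i)" by metis
  define n where "n = max N (Max (nb ` {..N}))"
  have "B n (f i)" for i
  proof (cases "i \<le> N")
    case True
    then have "nb i \<le> n" unfolding n_def by (simp add: le_max_iff_disj)
    then show ?thesis using mono nb by blast
  next
    case False
    then show ?thesis using N zero unfolding vanishes_above_def by auto
  qed
  moreover have "vanishes_above n f" using N unfolding n_def by (rule vanishes_above_mono) simp
  ultimately show "f \<in> {f. \<exists>n. vanishes_above n f \<and> (\<forall>i. B n (f i))}" by blast
next
  fix f assume "f \<in> {f. \<exists>n. vanishes_above n f \<and> (\<forall>i. B n (f i))}"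
  then show "f \<in> carrier E" unfolding ore_ext_carrier carrier by auto
qed

end

lemma C_ring_simps[simp]:
  "carrier C_ring = UNIV" "add C_ring = (+)" "zero C_ring = 0" "mult C_ring = (*)" "one C_ring = 1"
  unfolding C_ring_def by auto

lemma type_add_ring_C_ring: "type_add_ring C_ring"
proof (rule type_add_ringI)
  show "ring C_ring"
  proof (rule ringI)
    show "abelian_group C_ring"
      by (rule abelian_groupI) (auto simp: algebra_simps intro: exI[of _ "- _"])
    show "monoid C_ring" by (rule monoidI) auto
  qed (auto simp: algebra_simps)
qed simp_all

interpretation C: ore_data C_ring id "\<lambda>_. 0 :: complex"
  using type_add_ring_C_ring
  by (rule ore_dataI)
    (auto simp: ring_hom_def type_add_ring.sigma_derivation_zero[OF type_add_ring_C_ring])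

abbreviation "CL \<equiv> ore_ext C_ring id (\<lambda>_. 0 :: complex)"

lemma CL_carrier: "carrier CL = {f. \<exists>n. vanishes_above n f}"
  unfolding C.ore_ext_carrier by simp

lemma CL_one: "one CL = (\<lambda>a. if a = 0 then 1 else 0)"
  unfolding C.ore_ext_one C.ore_const_eq by (simp add: fun_eq_iff)

lemma C_T_pow: "(ore_var_mult id (\<lambda>_. 0) ^^ i) g = (\<lambda>k. if i \<le> k then g (k - i) else (0::complex))"
proof (induct i)
  case (Suc i)
  show ?case
    unfolding C.T_pow_Suc Suc
  proof
    fix k show "ore_var_mult id (\<lambda>_. 0) (\<lambda>k. if i \<le> k then g (k - i) else 0) k
        = (if Suc i \<le> k then g (k - Suc i) else 0)"
      unfolding C.T_eq by (cases k) simp_all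
  qed
qed simp

lemma CL_mult: "f \<in> carrier CL \<Longrightarrow> g \<in> carrier CL \<Longrightarrow>
   f \<otimes>\<^bsub>CL\<^esub> g = (\<lambda>k. \<Sum>i\<le>k. f i * g (k - i))"
proof
  fix k assume f: "f \<in> carrier CL" and g: "g \<in> carrier CL"
  obtain N where N: "vanishes_above N f" using CL_carrier f by blast
  have "(f \<otimes>\<^bsub>CL\<^esub> g) k = (\<Sum>i\<le>N. f i * (if i \<le> k then g (k - i) else 0))"
    unfolding C.ore_mult_expand[OF f g N] C_T_pow by simp
  also have "\<dots> = (\<Sum>i\<le>N + k. f i * (if i \<le> k then g (k - i) else 0))"
    by (rule sum_atMost_vanishes_above[OF N]) simp
  also have "\<dots> = (\<Sum>i\<le>k. f i * g (k - i))"
    by (rule sum.mono_neutral_cong_right) auto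
  finally show "(f \<otimes>\<^bsub>CL\<^esub> g) k = (\<Sum>i\<le>k. f i * g (k - i))" .
qed

definition sigma_P :: "real \<Rightarrow> (nat \<Rightarrow> complex) \<Rightarrow> nat \<Rightarrow> complex" where
  "sigma_P q f = (\<lambda>a. (1 / complex_of_real q) ^ a * f a)"

lemma vanishes_above_scale: "vanishes_above n f \<Longrightarrow> vanishes_above n (\<lambda>k. c k * (f k :: complex))"
  unfolding vanishes_above_def by auto

lemma sigma_P_closed: "f \<in> carrier CL \<Longrightarrow> sigma_P q f \<in> carrier CL"
  unfolding CL_carrier sigma_P_def using vanishes_above_scale by blast

lemma sigma_P_hom: "sigma_P q \<in> ring_hom CL CL"
proof (rule ring_hom_memI)
  fix x y assume x: "x \<in> carrier CL" and y: "y \<in> carrier CL"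
  show "sigma_P q (x \<otimes>\<^bsub>CL\<^esub> y) = sigma_P q x \<otimes>\<^bsub>CL\<^esub> sigma_P q y"
    unfolding CL_mult[OF x y] CL_mult[OF sigma_P_closed[OF x] sigma_P_closed[OF y]]
    unfolding sigma_P_def sum_distrib_left
    by (intro ext sum.cong) (auto simp: power_add[symmetric])
  show "sigma_P q (x \<oplus>\<^bsub>CL\<^esub> y) = sigma_P q x \<oplus>\<^bsub>CL\<^esub> sigma_P q y"
    by (auto simp: sigma_P_def fun_eq_iff algebra_simps)
next
  show "sigma_P q x \<in> carrier CL" if "x \<in> carrier CL" for x
    using that by (rule sigma_P_closed)
  show "sigma_P q \<one>\<^bsub>CL\<^esub> = \<one>\<^bsub>CL\<^esub>"
    unfolding CL_one sigma_P_def by (simp add: fun_eq_iff)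
qed

lemma sigma_P_iso: "q \<noteq> 0 \<Longrightarrow> sigma_P q \<in> ring_iso CL CL"
proof -
  assume q: "q \<noteq> 0"
  let ?inv = "\<lambda>f a. complex_of_real q ^ a * f a"
  have "bij_betw (sigma_P q) (carrier CL) (carrier CL)"
  proof (rule bij_betw_byWitness[of _ ?inv])
    show "?inv ` carrier CL \<subseteq> carrier CL"
      unfolding CL_carrier using vanishes_above_scale by blast
    show "sigma_P q ` carrier CL \<subseteq> carrier CL"
      using sigma_P_closed by blast
  qed (use q in \<open>auto simp: sigma_P_def fun_eq_iff power_mult_distrib[symmetric]\<close>)
  then show ?thesis unfolding ring_iso_def using sigma_P_hom by blast
qed

interpretation CL: ore_data CL "sigma_P q" "\<lambda>_. 0" for q
proof (rule ore_dataI[OF C.type_add_ring_ore_ext sigma_P_hom])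
  show "sigma_derivation CL (sigma_P q) (\<lambda>_. 0)"
    using C.type_add_ring_ore_ext sigma_P_closed
    by (intro type_add_ring.sigma_derivation_zero) auto
qed

abbreviation "CLP q \<equiv> ore_ext CL (sigma_P q) (\<lambda>_. 0)"

definition vanishes_above2 :: "nat \<Rightarrow> (nat \<Rightarrow> nat \<Rightarrow> complex) \<Rightarrow> bool" where
  "vanishes_above2 n F \<longleftrightarrow> (\<forall>b a. n < b \<or> n < a \<longrightarrow> F b a = 0)"

lemma vanishes_above2_scale: "vanishes_above2 n F \<Longrightarrow> vanishes_above2 n (\<lambda>b a. c b a * F b a)"
  unfolding vanishes_above2_def by auto

lemma vanishes_above2_iff: "vanishes_above2 n F \<longleftrightarrow> vanishes_above n F \<and> (\<forall>b. vanishes_above n (F b))"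
  unfolding vanishes_above2_def vanishes_above_def by (auto simp: fun_eq_iff)

lemma CLP_carrier: "carrier (CLP q) = {F. \<exists>n. vanishes_above2 n F}"
proof -
  have "carrier (CLP q) = {F. \<exists>n. vanishes_above n F \<and> (\<forall>b. vanishes_above n (F b))}"
    by (rule CL.ore_ext_carrier_bounded[OF CL_carrier vanishes_above_mono])
      (simp_all add: vanishes_above_def)
  then show ?thesis by (simp add: vanishes_above2_iff)
qed

lemma CLP_one: "one (CLP q) = (\<lambda>b a. if b = 0 \<and> a = 0 then 1 else 0)"
  unfolding CL.ore_ext_one CL.ore_const_eq CL_one by (auto simp: fun_eq_iff)

lemma sigma_P_pow: "(sigma_P q ^^ i) f = (\<lambda>a. (1 / complex_of_real q) ^ (i * a) * f a)"
  by (induct i) (auto simp: sigma_P_def fun_eq_iff power_add mult.assoc)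

lemma CL_T_pow: "(ore_var_mult (sigma_P q) (\<lambda>_. 0) ^^ i) G
    = (\<lambda>b. if i \<le> b then (sigma_P q ^^ i) (G (b - i)) else 0)"
proof (induct i)
  case (Suc i)
  show ?case
    unfolding CL.T_pow_Suc Suc
  proof
    fix b show "ore_var_mult (sigma_P q) (\<lambda>_. 0) (\<lambda>b. if i \<le> b then (sigma_P q ^^ i) (G (b - i))
      else 0) b
        = (if Suc i \<le> b then (sigma_P q ^^ Suc i) (G (b - Suc i)) else 0)"
      unfolding CL.T_eq by (cases b) (simp_all add: sigma_P_def fun_eq_iff)
  qed
qed simp

lemma CLP_mult: "F \<in> carrier (CLP q) \<Longrightarrow> G \<in> carrier (CLP q) \<Longrightarrow> F \<otimes>\<^bsub>CLP q\<^esub> G =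
   (\<lambda>b a. \<Sum>i\<le>b. \<Sum>l\<le>a. F i l * ((1 / complex_of_real q) ^ (i * (a - l)) * G (b - i) (a - l)))"
proof (intro ext)
  fix b a assume F: "F \<in> carrier (CLP q)" and G: "G \<in> carrier (CLP q)"
  obtain N where N: "vanishes_above N F" using CL.ore_ext_vanishes_above F by blast
  have Fi: "\<And>i. F i \<in> carrier CL" using F by (rule CL.ore_ext_coeff_closed)
  have Gs: "(sigma_P q ^^ i) (G j) \<in> carrier CL" for i j
  proof -
    obtain n where "vanishes_above n (G j)"
      using CL.ore_ext_coeff_closed[OF G, of j] unfolding CL_carrier by blast
    then show ?thesis
      unfolding sigma_P_pow CL_carrier
      using vanishes_above_scale[of n "G j" "\<lambda>a. (1 / complex_of_real q) ^ (i * a)"] by blast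
  qed
  have "(F \<otimes>\<^bsub>CLP q\<^esub> G) b = (\<Sum>i\<le>N. F i \<otimes>\<^bsub>CL\<^esub> (if i \<le> b then (sigma_P q ^^ i) (G (b - i)) else 0))"
    unfolding CL.ore_mult_expand[OF F G N] CL_T_pow ..
  also have "\<dots> = (\<Sum>i\<le>N + b. if i \<le> b then F i \<otimes>\<^bsub>CL\<^esub> (sigma_P q ^^ i) (G (b - i)) else 0)"
  proof (rule sum.mono_neutral_cong_left)
    show "\<forall>i\<in>{..N + b} - {..N}. (if i \<le> b then F i \<otimes>\<^bsub>CL\<^esub> (sigma_P q ^^ i) (G (b - i)) else 0) = 0"
      using N Gs unfolding vanishes_above_def by (auto simp: CL.mult_0_left)
  qed (auto simp: CL.mult_0_right[OF Fi])
  also have "\<dots> = (\<Sum>i\<le>b. F i \<otimes>\<^bsub>CL\<^esub> (sigma_P q ^^ i) (G (b - i)))"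
    by (rule sum.mono_neutral_cong_right) auto
  finally have "(F \<otimes>\<^bsub>CLP q\<^esub> G) b a = (\<Sum>i\<le>b. (F i \<otimes>\<^bsub>CL\<^esub> (sigma_P q ^^ i) (G (b - i))) a)"
    by (simp add: sum_fun_apply)
  also have "\<dots> = (\<Sum>i\<le>b. \<Sum>l\<le>a. F i l * ((1 / complex_of_real q) ^ (i * (a - l))
    * G (b - i) (a - l)))"
    by (rule sum.cong[OF refl]) (simp add: CL_mult[OF Fi Gs[unfolded sigma_P_pow]] sigma_P_pow)
  finally show "(F \<otimes>\<^bsub>CLP q\<^esub> G) b a
      = (\<Sum>i\<le>b. \<Sum>l\<le>a. F i l * ((1 / complex_of_real q) ^ (i * (a - l)) * G (b - i) (a - l)))" .
qed

definition sigma_X :: "real \<Rightarrow> (nat \<Rightarrow> nat \<Rightarrow> complex) \<Rightarrow> nat \<Rightarrow> nat \<Rightarrow> complex" where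
  "sigma_X q F = (\<lambda>b a. complex_of_real q ^ a * (1 / complex_of_real q) ^ b * F b a)"

definition qint :: "real \<Rightarrow> nat \<Rightarrow> complex" where
  "qint q n = (\<Sum>j<n. (1 / complex_of_real q) ^ (2 * j))"

definition kappa :: "real \<Rightarrow> real \<Rightarrow> complex" where
  "kappa q hbar = \<i> * complex_of_real hbar / qhalf q"

text \<open>The sigma_X-Leibniz rule, together with delta_X(p) = kappa Lambda, sigma_X(p) = q^-1 p and
  p Lambda = q^-1 Lambda p, forces delta_X(Lambda^a p^b) = kappa q^a [b] Lambda^(a+1) p^(b-1).\<close>
definition delta_X :: "real \<Rightarrow> real \<Rightarrow> (nat \<Rightarrow> nat \<Rightarrow> complex) \<Rightarrow> nat \<Rightarrow> nat \<Rightarrow> complex" where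
  "delta_X q hbar F = (\<lambda>b a. if a = 0 then 0
      else kappa q hbar * complex_of_real q ^ (a - 1) * qint q (b + 1) * F (b + 1) (a - 1))"

lemma qint_add: "qint q (i + m) = qint q i + (1 / complex_of_real q) ^ (2 * i) * qint q m"
  by (induct m) (auto simp: qint_def algebra_simps power_add)

lemma sigma_X_closed: "F \<in> carrier (CLP q) \<Longrightarrow> sigma_X q F \<in> carrier (CLP q)"
proof -
  assume "F \<in> carrier (CLP q)"
  then obtain n where "vanishes_above2 n F" unfolding CLP_carrier by blast
  then have "vanishes_above2 n (sigma_X q F)"
    unfolding sigma_X_def by (rule vanishes_above2_scale[where c = "\<lambda>b a. _ ^ a * _ ^ b"])
  then show ?thesis unfolding CLP_carrier by blast
qed

lemma delta_X_closed: "F \<in> carrier (CLP q) \<Longrightarrow> delta_X q hbar F \<in> carrier (CLP q)"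
proof -
  assume "F \<in> carrier (CLP q)"
  then obtain n where "vanishes_above2 n F" unfolding CLP_carrier by blast
  then have "vanishes_above2 (Suc n) (delta_X q hbar F)"
    unfolding vanishes_above2_def delta_X_def by auto
  then show ?thesis unfolding CLP_carrier by blast
qed

lemma sigma_X_hom: "sigma_X q \<in> ring_hom (CLP q) (CLP q)"
proof (rule ring_hom_memI)
  fix x y assume x: "x \<in> carrier (CLP q)" and y: "y \<in> carrier (CLP q)"
  let ?Q = "complex_of_real q"
  show "sigma_X q (x \<otimes>\<^bsub>CLP q\<^esub> y) = sigma_X q x \<otimes>\<^bsub>CLP q\<^esub> sigma_X q y"
    unfolding CLP_mult[OF x y] CLP_mult[OF sigma_X_closed[OF x] sigma_X_closed[OF y]]
    unfolding sigma_X_def sum_distrib_left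
  proof (intro ext sum.cong refl)
    fix a b i l :: nat assume "i \<in> {..b}" "l \<in> {..a}"
    then have "?Q ^ a = ?Q ^ l * ?Q ^ (a - l)" "(1 / ?Q) ^ b = (1 / ?Q) ^ i * (1 / ?Q) ^ (b - i)"
      by (simp_all add: power_add[symmetric])
    then show "?Q ^ a * (1 / ?Q) ^ b * (x i l * ((1 / ?Q) ^ (i * (a - l)) * y (b - i) (a - l))) =
        ?Q ^ l * (1 / ?Q) ^ i * x i l *
          ((1 / ?Q) ^ (i * (a - l)) * (?Q ^ (a - l) * (1 / ?Q) ^ (b - i) * y (b - i) (a - l)))"
      by (simp only: ac_simps)
  qed
  show "sigma_X q (x \<oplus>\<^bsub>CLP q\<^esub> y) = sigma_X q x \<oplus>\<^bsub>CLP q\<^esub> sigma_X q y"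
    by (auto simp: sigma_X_def fun_eq_iff algebra_simps)
next
  show "sigma_X q x \<in> carrier (CLP q)" if "x \<in> carrier (CLP q)" for x
    using that by (rule sigma_X_closed)
  show "sigma_X q \<one>\<^bsub>CLP q\<^esub> = \<one>\<^bsub>CLP q\<^esub>"
    unfolding CLP_one sigma_X_def by (simp add: fun_eq_iff)
qed

lemma sigma_X_iso: "q \<noteq> 0 \<Longrightarrow> sigma_X q \<in> ring_iso (CLP q) (CLP q)"
proof -
  assume q: "q \<noteq> 0"
  let ?Q = "complex_of_real q"
  let ?inv = "\<lambda>F b a. (1 / ?Q) ^ a * ?Q ^ b * F b a"
  have cancel: "?Q ^ n * (1 / ?Q) ^ n = 1" for n
    using q by (simp add: power_mult_distrib[symmetric])
  have "bij_betw (sigma_X q) (carrier (CLP q)) (carrier (CLP q))"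
  proof (rule bij_betw_byWitness[of _ ?inv])
    have "?inv (sigma_X q F) b a = ((1 / ?Q) ^ a * ?Q ^ a) * (?Q ^ b * (1 / ?Q) ^ b) * F b a"
      "sigma_X q (?inv F) b a = (?Q ^ a * (1 / ?Q) ^ a) * ((1 / ?Q) ^ b * ?Q ^ b) * F b a" for F b a
      unfolding sigma_X_def by (simp_all add: ac_simps)
    then show "\<forall>F\<in>carrier (CLP q). ?inv (sigma_X q F) = F" "\<forall>F\<in>carrier (CLP q). sigma_X q (?inv F)
      = F"
      using cancel by (simp_all add: fun_eq_iff mult.commute)
    show "?inv ` carrier (CLP q) \<subseteq> carrier (CLP q)"
      unfolding CLP_carrier using vanishes_above2_scale[where c = "\<lambda>b a. _ ^ a * _ ^ b"] by blast
  qed (use sigma_X_closed in blast)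
  then show ?thesis unfolding ring_iso_def using sigma_X_hom by blast
qed

lemma qint_0[simp]: "qint q 0 = 0"
  unfolding qint_def by simp

lemma qint_Suc: "qint q (Suc b) = qint q b + (1 / complex_of_real q) ^ b
    * (1 / complex_of_real q) ^ b"
  unfolding qint_def sum.lessThan_Suc mult_2 power_add ..

lemma delta_X_coeff_identity:
  fixes Q r k :: complex
  assumes Qr: "Q * r = 1" and r: "r = 1 / complex_of_real q"
  shows "k * Q ^ (l + u) * qint q (i + m) * r ^ (i * u) = Q ^ l * r ^ i * r ^ (i * Suc u) *
     (k * Q ^ u * qint q m) + k * Q ^ l * qint q i * r ^ ((i - 1) * u)"
proof -
  have "r ^ (2 * i) = r ^ i * r ^ i" by (simp add: mult_2 power_add)
  then have first: "Q ^ l * r ^ i * r ^ (i * Suc u) * (k * Q ^ u * qint q m)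
      = k * Q ^ (l + u) * r ^ (i * u) * (r ^ (2 * i) * qint q m)"
    by (simp add: power_add algebra_simps)
  have second: "k * Q ^ l * qint q i * r ^ ((i - 1) * u) = k * Q ^ (l + u) * r ^ (i * u) * qint q i"
  proof (cases i)
    case (Suc i')
    have "Q ^ u * r ^ u = 1" using Qr by (simp add: power_mult_distrib[symmetric])
    then have "Q ^ (l + u) * r ^ (i * u) = Q ^ l * r ^ (i' * u) * (Q ^ u * r ^ u)"
      unfolding Suc by (simp add: power_add algebra_simps)
    then show ?thesis using \<open>Q ^ u * r ^ u = 1\<close> Suc by (simp add: algebra_simps)
  qed simp
  show ?thesis unfolding first second qint_add[of q, folded r] by (simp add: algebra_simps)
qed

text \<open>The three sides of the Leibniz rule for delta_X, evaluated at (b, a + 1), are all of this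
  shape; the rule then reduces to an identity between the weights.\<close>
definition weighted_conv ::
    "(nat \<Rightarrow> nat \<Rightarrow> complex) \<Rightarrow> (nat \<Rightarrow> nat \<Rightarrow> complex) \<Rightarrow> nat \<Rightarrow> nat \<Rightarrow> (nat \<Rightarrow> nat \<Rightarrow> complex) \<Rightarrow> complex"
  where "weighted_conv F G b a w = (\<Sum>i\<le>Suc b. \<Sum>l\<le>a. F i l * G (Suc b - i) (a - l) * w i l)"

lemma weighted_conv_add: "weighted_conv F G b a (\<lambda>i l. w i l + w' i l)
    = weighted_conv F G b a w + weighted_conv F G b a w'"
  unfolding weighted_conv_def by (simp add: sum.distrib algebra_simps)

lemma delta_X_mult_coeff:
  assumes F: "F \<in> carrier (CLP q)" and G: "G \<in> carrier (CLP q)"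
  shows "delta_X q hbar (F \<otimes>\<^bsub>CLP q\<^esub> G) b (Suc a) = weighted_conv F G b a (\<lambda>i l.
    kappa q hbar * complex_of_real q ^ a * qint q (Suc b)
      * (1 / complex_of_real q) ^ (i * (a - l)))"
  unfolding weighted_conv_def CLP_mult[OF F G] delta_X_def
  by (simp add: sum_distrib_left algebra_simps)

lemma sigma_X_mult_delta_X_coeff:
  assumes F: "F \<in> carrier (CLP q)" and G: "G \<in> carrier (CLP q)"
  shows "(sigma_X q F \<otimes>\<^bsub>CLP q\<^esub> delta_X q hbar G) b (Suc a) = weighted_conv F G b a (\<lambda>i l.
    complex_of_real q ^ l * (1 / complex_of_real q) ^ i
      * (1 / complex_of_real q) ^ (i * Suc (a - l)) *
      (kappa q hbar * complex_of_real q ^ (a - l) * qint q (Suc b - i)))"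
proof -
  have "(sigma_X q F \<otimes>\<^bsub>CLP q\<^esub> delta_X q hbar G) b (Suc a) = (\<Sum>i\<le>b. \<Sum>l\<le>Suc a.
      sigma_X q F i l * ((1 / complex_of_real q) ^ (i * (Suc a - l))
        * delta_X q hbar G (b - i) (Suc a - l)))"
    unfolding CLP_mult[OF sigma_X_closed[OF F] delta_X_closed[OF G]] ..
  also have "\<dots> = (\<Sum>i\<le>b. \<Sum>l\<le>a. F i l * G (Suc b - i) (a - l) *
      (complex_of_real q ^ l * (1 / complex_of_real q) ^ i
        * (1 / complex_of_real q) ^ (i * Suc (a - l)) *
        (kappa q hbar * complex_of_real q ^ (a - l) * qint q (Suc b - i))))"
  proof (rule sum.cong[OF refl])
    fix i assume i: "i \<in> {..b}"
    have "Suc b - i = b - i + 1" using i by auto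
    then show "(\<Sum>l\<le>Suc a. sigma_X q F i l * ((1 / complex_of_real q) ^ (i * (Suc a - l))
        * delta_X q hbar G (b - i) (Suc a - l))) = (\<Sum>l\<le>a. F i l * G (Suc b - i) (a - l) *
        (complex_of_real q ^ l * (1 / complex_of_real q) ^ i
          * (1 / complex_of_real q) ^ (i * Suc (a - l)) *
          (kappa q hbar * complex_of_real q ^ (a - l) * qint q (Suc b - i))))"
      by (auto simp: delta_X_def sigma_X_def Suc_diff_le algebra_simps intro!: sum.cong)
  qed
  also have "\<dots> = weighted_conv F G b a (\<lambda>i l.
    complex_of_real q ^ l * (1 / complex_of_real q) ^ i
      * (1 / complex_of_real q) ^ (i * Suc (a - l)) *
      (kappa q hbar * complex_of_real q ^ (a - l) * qint q (Suc b - i)))"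
    unfolding weighted_conv_def by simp
  finally show ?thesis .
qed

lemma delta_X_mult_coeff':
  assumes F: "F \<in> carrier (CLP q)" and G: "G \<in> carrier (CLP q)"
  shows "(delta_X q hbar F \<otimes>\<^bsub>CLP q\<^esub> G) b (Suc a) = weighted_conv F G b a (\<lambda>i l.
    kappa q hbar * complex_of_real q ^ l * qint q i
      * (1 / complex_of_real q) ^ ((i - 1) * (a - l)))"
proof -
  have "(delta_X q hbar F \<otimes>\<^bsub>CLP q\<^esub> G) b (Suc a) = (\<Sum>i\<le>b. \<Sum>l\<le>Suc a.
      delta_X q hbar F i l * ((1 / complex_of_real q) ^ (i * (Suc a - l)) * G (b - i) (Suc a - l)))"
    unfolding CLP_mult[OF delta_X_closed[OF F] G] ..
  also have "\<dots> = (\<Sum>i\<le>b. \<Sum>l\<le>a. F (Suc i) l * G (Suc b - Suc i) (a - l) *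
      (kappa q hbar * complex_of_real q ^ l * qint q (Suc i)
        * (1 / complex_of_real q) ^ ((Suc i - 1) * (a - l))))"
    unfolding sum.atMost_Suc_shift by (simp add: delta_X_def algebra_simps)
  also have "\<dots> = weighted_conv F G b a (\<lambda>i l.
    kappa q hbar * complex_of_real q ^ l * qint q i
      * (1 / complex_of_real q) ^ ((i - 1) * (a - l)))"
    unfolding weighted_conv_def sum.atMost_Suc_shift[of _ b] by simp
  finally show ?thesis .
qed

lemma delta_X_mult:
  assumes q: "q \<noteq> 0" and F: "F \<in> carrier (CLP q)" and G: "G \<in> carrier (CLP q)"
  shows "delta_X q hbar (F \<otimes>\<^bsub>CLP q\<^esub> G)
    = sigma_X q F \<otimes>\<^bsub>CLP q\<^esub> delta_X q hbar G + delta_X q hbar F \<otimes>\<^bsub>CLP q\<^esub> G"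
proof (intro ext)
  fix b a
  let ?Q = "complex_of_real q" and ?r = "1 / complex_of_real q" and ?k = "kappa q hbar"
  show "delta_X q hbar (F \<otimes>\<^bsub>CLP q\<^esub> G) b a
      = (sigma_X q F \<otimes>\<^bsub>CLP q\<^esub> delta_X q hbar G + delta_X q hbar F \<otimes>\<^bsub>CLP q\<^esub> G) b a"
  proof (cases a)
    case 0
    then show ?thesis
      unfolding plus_fun_def CLP_mult[OF sigma_X_closed[OF F] delta_X_closed[OF G]]
        CLP_mult[OF delta_X_closed[OF F] G] by (simp add: delta_X_def)
  next
    case (Suc a')
    have "weighted_conv F G b a' (\<lambda>i l. ?k * ?Q ^ a' * qint q (Suc b) * ?r ^ (i * (a' - l)))
      = weighted_conv F G b a' (\<lambda>i l. ?Q ^ l * ?r ^ i * ?r ^ (i * Suc (a' - l)) *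
          (?k * ?Q ^ (a' - l) * qint q (Suc b - i))
        + ?k * ?Q ^ l * qint q i * ?r ^ ((i - 1) * (a' - l)))"
      unfolding weighted_conv_def
    proof (intro sum.cong refl)
      fix i l assume "i \<in> {..Suc b}" "l \<in> {..a'}"
      then have "l + (a' - l) = a'" "i + (Suc b - i) = Suc b" by simp_all
      then have "?k * ?Q ^ a' * qint q (Suc b) * ?r ^ (i * (a' - l))
        = ?Q ^ l * ?r ^ i * ?r ^ (i * Suc (a' - l)) * (?k * ?Q ^ (a' - l) * qint q (Suc b - i))
          + ?k * ?Q ^ l * qint q i * ?r ^ ((i - 1) * (a' - l))"
        using delta_X_coeff_identity[of ?Q ?r q ?k l "a' - l" i "Suc b - i"] q by simp
      then show "F i l * G (Suc b - i) (a' - l) * (?k * ?Q ^ a' * qint q (Suc b)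
        * ?r ^ (i * (a' - l)))
        = F i l * G (Suc b - i) (a' - l) * (?Q ^ l * ?r ^ i * ?r ^ (i * Suc (a' - l)) *
          (?k * ?Q ^ (a' - l) * qint q (Suc b - i)) + ?k * ?Q ^ l * qint q i
            * ?r ^ ((i - 1) * (a' - l)))"
        by (simp only:)
    qed
    then show ?thesis
      unfolding Suc plus_fun_def delta_X_mult_coeff[OF F G] sigma_X_mult_delta_X_coeff[OF F G]
        delta_X_mult_coeff'[OF F G] weighted_conv_add[symmetric] .
  qed
qed

lemma sigma_derivation_delta_X: "q \<noteq> 0 \<Longrightarrow> sigma_derivation (CLP q) (sigma_X q) (delta_X q hbar)"
  unfolding sigma_derivation_def
proof (intro conjI ballI)
  show "delta_X q hbar \<in> carrier (CLP q) \<rightarrow> carrier (CLP q)" using delta_X_closed by blast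
  fix F G assume "q \<noteq> 0" "F \<in> carrier (CLP q)" "G \<in> carrier (CLP q)"
  then show "delta_X q hbar (F \<otimes>\<^bsub>CLP q\<^esub> G)
      = sigma_X q F \<otimes>\<^bsub>CLP q\<^esub> delta_X q hbar G \<oplus>\<^bsub>CLP q\<^esub> delta_X q hbar F \<otimes>\<^bsub>CLP q\<^esub> G"
    by (simp add: delta_X_mult)
  show "delta_X q hbar (F \<oplus>\<^bsub>CLP q\<^esub> G) = delta_X q hbar F \<oplus>\<^bsub>CLP q\<^esub> delta_X q hbar G"
    by (simp add: delta_X_def fun_eq_iff algebra_simps)
qed

abbreviation "Lam_CL \<equiv> ore_var C_ring"
abbreviation "Lam_CLP \<equiv> ore_const CL Lam_CL"
abbreviation "P_CLP \<equiv> ore_var CL"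
abbreviation "scalar_CLP c \<equiv> ore_const CL (ore_const C_ring c)"

lemma complex_in_C_ring: "c \<in> carrier C_ring"
  by simp

lemma Lam_CL_eq: "Lam_CL = (\<lambda>a. if a = 1 then 1 else 0)"
  unfolding C.ore_var_eq C_ring_simps ..

lemma Lam_CLP_eq: "Lam_CLP = (\<lambda>b a. if b = 0 \<and> a = 1 then 1 else 0)"
  unfolding CL.ore_const_eq Lam_CL_eq by (auto simp: fun_eq_iff)

lemma P_CLP_eq: "P_CLP = (\<lambda>b a. if b = 1 \<and> a = 0 then 1 else 0)"
  unfolding CL.ore_var_eq CL_one by (auto simp: fun_eq_iff)

lemma scalar_CLP_eq: "scalar_CLP c = (\<lambda>b a. if b = 0 \<and> a = 0 then c else 0)"
  unfolding CL.ore_const_eq C.ore_const_eq by (auto simp: fun_eq_iff)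

lemma Lam_CL_closed: "Lam_CL \<in> carrier CL"
  by (rule C.ore_var_closed)

lemma Lam_CLP_closed: "Lam_CLP \<in> carrier (CLP q)"
  by (rule CL.ore_const_closed[OF Lam_CL_closed])

lemma P_CLP_closed: "P_CLP \<in> carrier (CLP q)"
  by (rule CL.ore_var_closed)

lemma scalar_CLP_closed: "scalar_CLP c \<in> carrier (CLP q)"
  by (rule CL.ore_const_closed[OF C.ore_const_closed[OF complex_in_C_ring]])

lemma Lam_CL_mult: "h \<in> carrier CL \<Longrightarrow> Lam_CL \<otimes>\<^bsub>CL\<^esub> h = (\<lambda>a. if a = 0 then 0 else h (a - 1))"
  unfolding C.ore_var_mult_eq by (auto simp: C.T_eq fun_eq_iff)

lemma Lam_CLP_mult:
  "G \<in> carrier (CLP q) \<Longrightarrow> Lam_CLP \<otimes>\<^bsub>CLP q\<^esub> G = (\<lambda>b a. if a = 0 then 0 else G b (a - 1))"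
  unfolding CL.ore_const_mult[OF Lam_CL_closed]
  using CL.ore_ext_coeff_closed[of G] Lam_CL_mult by (auto simp: fun_eq_iff)

lemma P_CLP_mult: "G \<in> carrier (CLP q) \<Longrightarrow> P_CLP \<otimes>\<^bsub>CLP q\<^esub> G =
    (\<lambda>b a. if b = 0 then 0 else (1 / complex_of_real q) ^ a * G (b - 1) a)"
  unfolding CL.ore_var_mult_eq by (auto simp: CL.T_eq fun_eq_iff sigma_P_def)

lemma scalar_CLP_mult: "G \<in> carrier (CLP q) \<Longrightarrow> scalar_CLP c \<otimes>\<^bsub>CLP q\<^esub> G = (\<lambda>b a. c * G b a)"
  unfolding CL.ore_const_mult[OF C.ore_const_closed[OF complex_in_C_ring]]
  using CL.ore_ext_coeff_closed[of G] C.ore_const_mult[OF complex_in_C_ring]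
  by (auto simp: fun_eq_iff)

lemma sigma_P_scalar: "sigma_P q (ore_const C_ring c) = ore_const C_ring c"
  unfolding sigma_P_def C.ore_const_eq by (auto simp: fun_eq_iff)

lemma sigma_P_Lam: "sigma_P q Lam_CL = ore_const C_ring (complex_of_real (1 / q)) \<otimes>\<^bsub>CL\<^esub> Lam_CL"
  unfolding C.ore_const_mult[OF complex_in_C_ring Lam_CL_closed] unfolding Lam_CL_eq sigma_P_def
  by (auto simp: fun_eq_iff)

lemma sigma_X_scalar: "sigma_X q (scalar_CLP c) = scalar_CLP c"
  unfolding scalar_CLP_eq sigma_X_def by (auto simp: fun_eq_iff)

lemma delta_X_scalar: "delta_X q hbar (scalar_CLP c) = \<zero>\<^bsub>CLP q\<^esub>"
  unfolding CL.ore_ext_zero scalar_CLP_eq delta_X_def by (auto simp: fun_eq_iff)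

lemma sigma_X_Lam: "sigma_X q Lam_CLP = scalar_CLP (complex_of_real q) \<otimes>\<^bsub>CLP q\<^esub> Lam_CLP"
  unfolding scalar_CLP_mult[OF Lam_CLP_closed] unfolding Lam_CLP_eq sigma_X_def
    by (auto simp: fun_eq_iff)

lemma delta_X_Lam: "delta_X q hbar Lam_CLP = \<zero>\<^bsub>CLP q\<^esub>"
  unfolding CL.ore_ext_zero Lam_CLP_eq delta_X_def by (auto simp: fun_eq_iff)

lemma sigma_X_P: "sigma_X q P_CLP = scalar_CLP (complex_of_real (1 / q)) \<otimes>\<^bsub>CLP q\<^esub> P_CLP"
  unfolding scalar_CLP_mult[OF P_CLP_closed] unfolding P_CLP_eq sigma_X_def
    by (auto simp: fun_eq_iff)

lemma delta_X_P:
  "delta_X q hbar P_CLP = scalar_CLP (\<i> * complex_of_real hbar / qhalf q) \<otimes>\<^bsub>CLP q\<^esub> Lam_CLP"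
  unfolding scalar_CLP_mult[OF Lam_CLP_closed] unfolding P_CLP_eq Lam_CLP_eq delta_X_def kappa_def
  by (auto simp: fun_eq_iff qint_def)

lemma scalar_CLP_central:
  "G \<in> carrier (CLP q) \<Longrightarrow> G \<otimes>\<^bsub>CLP q\<^esub> scalar_CLP c = scalar_CLP c \<otimes>\<^bsub>CLP q\<^esub> G"
proof (rule CL.ore_const_central[OF C.ore_const_closed[OF complex_in_C_ring] sigma_P_scalar])
  show "a \<otimes>\<^bsub>CL\<^esub> ore_const C_ring c = ore_const C_ring c \<otimes>\<^bsub>CL\<^esub> a" if "a \<in> carrier CL" for a
    by (rule C.ore_const_central[OF complex_in_C_ring _ _ _ that]) simp_all
qed simp_all

subsection \<open>The ring C[Lambda][p][x]\<close>

text \<open>An element F of C[Lambda][p][x] has the coefficient F c b a at Lambda^a p^b x^c.\<close>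

abbreviation "CLPX q hbar \<equiv> ore_ext (CLP q) (sigma_X q) (delta_X q hbar)"

definition vanishes_above3 :: "nat \<Rightarrow> (nat \<Rightarrow> nat \<Rightarrow> nat \<Rightarrow> complex) \<Rightarrow> bool" where
  "vanishes_above3 n F \<longleftrightarrow> (\<forall>c b a. n < c \<or> n < b \<or> n < a \<longrightarrow> F c b a = 0)"

definition lpx_mono :: "nat \<Rightarrow> nat \<Rightarrow> nat \<Rightarrow> nat \<Rightarrow> nat \<Rightarrow> nat \<Rightarrow> complex" where
  "lpx_mono a b c = (\<lambda>c' b' a'. if c' = c \<and> b' = b \<and> a' = a then 1 else 0)"

definition lpx_smult ::
    "complex \<Rightarrow> (nat \<Rightarrow> nat \<Rightarrow> nat \<Rightarrow> complex) \<Rightarrow> nat \<Rightarrow> nat \<Rightarrow> nat \<Rightarrow> complex" where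
  "lpx_smult k F = (\<lambda>c b a. k * F c b a)"

locale heisenberg =
  fixes q hbar :: real
  assumes q_nonzero: "q \<noteq> 0"

sublocale heisenberg \<subseteq> CLP: ore_data "CLP q" "sigma_X q" "delta_X q hbar"
  using CL.type_add_ring_ore_ext sigma_X_hom sigma_derivation_delta_X[OF q_nonzero]
  by (rule ore_dataI)

context heisenberg
begin

abbreviation "R \<equiv> CLPX q hbar"
abbreviation "Lam_R \<equiv> ore_const (CLP q) Lam_CLP"
abbreviation "P_R \<equiv> ore_const (CLP q) P_CLP"
abbreviation "X_R \<equiv> ore_var (CLP q)"
abbreviation "scalar_R c \<equiv> ore_const (CLP q) (scalar_CLP c)"

sublocale R: type_add_ring R
  by (rule CLP.type_add_ring_ore_ext)

lemma vanishes_above3_iff: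
  "vanishes_above3 n F \<longleftrightarrow> vanishes_above n F \<and> (\<forall>c. vanishes_above2 n (F c))"
  unfolding vanishes_above3_def vanishes_above2_def vanishes_above_def by (auto simp: fun_eq_iff)

lemma R_carrier: "carrier R = {F. \<exists>n. vanishes_above3 n F}"
proof -
  have "carrier R = {F. \<exists>n. vanishes_above n F \<and> (\<forall>c. vanishes_above2 n (F c))}"
    by (rule CLP.ore_ext_carrier_bounded[OF CLP_carrier]) (auto simp: vanishes_above2_def)
  then show ?thesis by (simp add: vanishes_above3_iff)
qed

lemma lpx_mono_closed: "lpx_mono a b c \<in> carrier R"
  unfolding R_carrier vanishes_above3_def lpx_mono_def
  by (intro CollectI exI[of _ "max a (max b c)"]) auto

lemma R_one: "one R = lpx_mono 0 0 0"
  unfolding CLP.ore_ext_one CL.ore_ext_one CL.ore_const_eq CLP.ore_const_eq CL_one lpx_mono_def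
  by (auto simp: fun_eq_iff)

lemma X_R_eq: "X_R = lpx_mono 0 0 1"
  unfolding CLP.ore_var_eq CLP_one lpx_mono_def by (auto simp: fun_eq_iff)

lemma P_R_eq: "P_R = lpx_mono 0 1 0"
  unfolding CLP.ore_const_eq P_CLP_eq lpx_mono_def by (auto simp: fun_eq_iff)

lemma Lam_R_eq: "Lam_R = lpx_mono 1 0 0"
  unfolding CLP.ore_const_eq Lam_CLP_eq lpx_mono_def by (auto simp: fun_eq_iff)

lemma scalar_R_eq: "scalar_R c = lpx_smult c (lpx_mono 0 0 0)"
  unfolding CLP.ore_const_eq scalar_CLP_eq lpx_mono_def lpx_smult_def by (auto simp: fun_eq_iff)

lemma Lam_R_mult:
  "F \<in> carrier R \<Longrightarrow> Lam_R \<otimes>\<^bsub>R\<^esub> F = (\<lambda>c b a. if a = 0 then 0 else F c b (a - 1))"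
  unfolding CLP.ore_const_mult[OF Lam_CLP_closed]
  using CLP.ore_ext_coeff_closed[of F] Lam_CLP_mult by (auto simp: fun_eq_iff)

lemma P_R_mult: "F \<in> carrier R \<Longrightarrow> P_R \<otimes>\<^bsub>R\<^esub> F =
    (\<lambda>c b a. if b = 0 then 0 else (1 / complex_of_real q) ^ a * F c (b - 1) a)"
  unfolding CLP.ore_const_mult[OF P_CLP_closed]
  using CLP.ore_ext_coeff_closed[of F] P_CLP_mult by (auto simp: fun_eq_iff)

lemma X_R_mult: "F \<in> carrier R \<Longrightarrow> X_R \<otimes>\<^bsub>R\<^esub> F = (\<lambda>c b a.
    (if c = 0 then 0 else complex_of_real q ^ a * (1 / complex_of_real q) ^ b * F (c - 1) b a)
    + (if a = 0 then 0
       else kappa q hbar * complex_of_real q ^ (a - 1) * qint q (b + 1) * F c (b + 1) (a - 1)))"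
  unfolding CLP.ore_var_mult_eq by (auto simp: CLP.T_eq fun_eq_iff sigma_X_def delta_X_def)

lemma scalar_R_mult: "F \<in> carrier R \<Longrightarrow> scalar_R c \<otimes>\<^bsub>R\<^esub> F = lpx_smult c F"
  unfolding CLP.ore_const_mult[OF scalar_CLP_closed] lpx_smult_def
  using CLP.ore_ext_coeff_closed[of F] scalar_CLP_mult by (auto simp: fun_eq_iff)

lemma scalar_R_central: "F \<in> carrier R \<Longrightarrow> F \<otimes>\<^bsub>R\<^esub> scalar_R c = scalar_R c \<otimes>\<^bsub>R\<^esub> F"
  using CLP.ore_const_central[OF scalar_CLP_closed sigma_X_scalar] delta_X_scalar scalar_CLP_central
  by simp

lemma scalar_R_closed: "scalar_R c \<in> carrier R"
  by (rule CLP.ore_const_closed[OF scalar_CLP_closed])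

lemma lpx_smult_eq: "F \<in> carrier R \<Longrightarrow> lpx_smult c F = scalar_R c \<otimes>\<^bsub>R\<^esub> F"
  by (simp add: scalar_R_mult)

lemma lpx_smult_closed: "F \<in> carrier R \<Longrightarrow> lpx_smult c F \<in> carrier R"
  unfolding lpx_smult_eq by (rule R.m_closed[OF scalar_R_closed])

lemma lpx_smult_mult_left:
  "F \<in> carrier R \<Longrightarrow> G \<in> carrier R \<Longrightarrow> lpx_smult c F \<otimes>\<^bsub>R\<^esub> G = lpx_smult c (F \<otimes>\<^bsub>R\<^esub> G)"
  by (simp add: lpx_smult_eq scalar_R_closed R.m_assoc)

lemma lpx_smult_mult_right:
  "F \<in> carrier R \<Longrightarrow> G \<in> carrier R \<Longrightarrow> F \<otimes>\<^bsub>R\<^esub> lpx_smult c G = lpx_smult c (F \<otimes>\<^bsub>R\<^esub> G)"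
  by (simp add: lpx_smult_eq scalar_R_closed R.m_assoc[symmetric] scalar_R_central)

lemma lpx_smult_add: "lpx_smult c (F + G) = lpx_smult c F + lpx_smult c G"
  unfolding lpx_smult_def by (auto simp: fun_eq_iff algebra_simps)

lemma lpx_smult_add_scalar: "lpx_smult (c + d) F = lpx_smult c F + lpx_smult d F"
  unfolding lpx_smult_def by (auto simp: fun_eq_iff algebra_simps)

lemma lpx_smult_sum_scalar: "lpx_smult (sum f S) F = (\<Sum>x\<in>S. lpx_smult (f x) F)"
  unfolding lpx_smult_def by (induct S rule: infinite_finite_induct)
    (auto simp: fun_eq_iff algebra_simps)

lemma lpx_smult_sum: "lpx_smult c (sum f S) = (\<Sum>x\<in>S. lpx_smult c (f x))"
  unfolding lpx_smult_def by (induct S rule: infinite_finite_induct)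
    (auto simp: fun_eq_iff algebra_simps)

lemma lpx_smult_lpx_smult: "lpx_smult c (lpx_smult d F) = lpx_smult (c * d) F"
  unfolding lpx_smult_def by (auto simp: fun_eq_iff)

lemma lpx_smult_one[simp]: "lpx_smult 1 F = F"
  unfolding lpx_smult_def by simp

lemma lpx_smult_zero[simp]: "lpx_smult 0 F = 0"
  unfolding lpx_smult_def by (simp add: fun_eq_iff)

lemma Lam_R_closed: "Lam_R \<in> carrier R"
  unfolding Lam_R_eq by (rule lpx_mono_closed)

lemma P_R_closed: "P_R \<in> carrier R"
  unfolding P_R_eq by (rule lpx_mono_closed)

lemma X_R_closed: "X_R \<in> carrier R"
  unfolding X_R_eq by (rule lpx_mono_closed)

lemma Lam_R_mono: "Lam_R \<otimes>\<^bsub>R\<^esub> lpx_mono a b c = lpx_mono (Suc a) b c"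
proof (intro ext)
  fix c' b' a'
  show "(Lam_R \<otimes>\<^bsub>R\<^esub> lpx_mono a b c) c' b' a' = lpx_mono (Suc a) b c c' b' a'"
    unfolding Lam_R_mult[OF lpx_mono_closed] unfolding lpx_mono_def by (cases a') simp_all
qed

lemma P_R_mono:
  "P_R \<otimes>\<^bsub>R\<^esub> lpx_mono a b c = lpx_smult ((1 / complex_of_real q) ^ a) (lpx_mono a (Suc b) c)"
proof (intro ext)
  fix c' b' a'
  show "(P_R \<otimes>\<^bsub>R\<^esub> lpx_mono a b c) c' b' a'
      = lpx_smult ((1 / complex_of_real q) ^ a) (lpx_mono a (Suc b) c) c' b' a'"
    unfolding P_R_mult[OF lpx_mono_closed] unfolding lpx_mono_def lpx_smult_def
      by (cases b') simp_all
qed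

lemma X_R_mono: "X_R \<otimes>\<^bsub>R\<^esub> lpx_mono a b c =
   lpx_smult (complex_of_real q ^ a * (1 / complex_of_real q) ^ b) (lpx_mono a b (Suc c))
   + lpx_smult (kappa q hbar * complex_of_real q ^ a * qint q b) (lpx_mono (Suc a) (b - 1) c)"
proof (intro ext)
  fix c' b' a'
  have shift: "(if c' = 0 then 0
        else complex_of_real q ^ a' * (1 / complex_of_real q) ^ b' * lpx_mono a b c (c' - 1) b' a')
      = lpx_smult (complex_of_real q ^ a * (1 / complex_of_real q) ^ b) (lpx_mono a b (Suc c)) c'
        b' a'"
    unfolding lpx_mono_def lpx_smult_def by (cases c') auto
  have derivation: "(if a' = 0 then 0 else kappa q hbar * complex_of_real q ^ (a' - 1)
    * qint q (b' + 1)
        * lpx_mono a b c c' (b' + 1) (a' - 1))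
      = lpx_smult (kappa q hbar * complex_of_real q ^ a * qint q b) (lpx_mono (Suc a) (b - 1) c) c'
        b' a'"
    unfolding lpx_mono_def lpx_smult_def by (cases b; cases a') auto
  show "(X_R \<otimes>\<^bsub>R\<^esub> lpx_mono a b c) c' b' a' =
    (lpx_smult (complex_of_real q ^ a * (1 / complex_of_real q) ^ b) (lpx_mono a b (Suc c))
     + lpx_smult (kappa q hbar * complex_of_real q ^ a * qint q b) (lpx_mono (Suc a) (b - 1) c)) c'
       b' a'"
    unfolding X_R_mult[OF lpx_mono_closed] plus_fun_def shift derivation ..
qed

end

section \<open>The free algebra on x, p, Lambda\<close>

definition fa_mult :: "(hgen list \<Rightarrow> complex) \<Rightarrow> (hgen list \<Rightarrow> complex) \<Rightarrow> hgen list \<Rightarrow> complex" where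
  "fa_mult f g = (\<lambda>w. \<Sum>i\<le>length w. f (take i w) * g (drop i w))"

definition fa_word :: "hgen list \<Rightarrow> hgen list \<Rightarrow> complex" where
  "fa_word u = (\<lambda>v. if v = u then 1 else 0)"

definition fa_smult :: "complex \<Rightarrow> (hgen list \<Rightarrow> complex) \<Rightarrow> hgen list \<Rightarrow> complex" where
  "fa_smult c f = (\<lambda>w. c * f w)"

lemma free_alg_carrier: "carrier free_alg = {f. finite {w. f w \<noteq> 0}}"
  and free_alg_add[simp]: "add free_alg = (+)" and free_alg_zero[simp]: "zero free_alg = 0"
  and free_alg_one: "one free_alg = fa_word []" and free_alg_mult: "mult free_alg = fa_mult"
  unfolding free_alg_def fa_word_def fa_mult_def by (auto simp: fun_eq_iff)

lemma finite_support_free_alg: "f \<in> carrier free_alg \<Longrightarrow> finite {w. f w \<noteq> 0}"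
  unfolding free_alg_carrier by simp

lemma sum_triangle_reindex:
  fixes F :: "nat \<Rightarrow> nat \<Rightarrow> 'a::comm_monoid_add"
  shows "(\<Sum>i\<le>n. \<Sum>j\<le>i. F i j) = (\<Sum>j\<le>n. \<Sum>k\<le>n - j. F (j + k) j)"
proof (induct n)
  case (Suc n)
  have "(\<Sum>j\<le>Suc n. \<Sum>k\<le>Suc n - j. F (j + k) j)
      = (\<Sum>j\<le>n. (\<Sum>k\<le>n - j. F (j + k) j) + F (Suc n) j) + F (Suc n) (Suc n)"
  proof -
    have "(\<Sum>k\<le>Suc n - j. F (j + k) j) = (\<Sum>k\<le>n - j. F (j + k) j) + F (Suc n) j" if "j \<le> n" for j
    proof -
      have "Suc n - j = Suc (n - j)" "j + Suc (n - j) = Suc n" using that by auto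
      then show ?thesis by simp
    qed
    then show ?thesis by simp
  qed
  also have "\<dots> = (\<Sum>i\<le>Suc n. \<Sum>j\<le>i. F i j)"
    by (simp add: sum.distrib Suc add.assoc)
  finally show ?case ..
qed simp

lemma fa_mult_support:
  "{w. fa_mult f g w \<noteq> 0} \<subseteq> (\<lambda>(u, v). u @ v) ` ({w. f w \<noteq> 0} \<times> {w. g w \<noteq> 0})"
proof
  fix w assume "w \<in> {w. fa_mult f g w \<noteq> 0}"
  then obtain i where "f (take i w) * g (drop i w) \<noteq> 0"
    unfolding fa_mult_def using sum.not_neutral_contains_not_neutral by force
  then show "w \<in> (\<lambda>(u, v). u @ v) ` ({w. f w \<noteq> 0} \<times> {w. g w \<noteq> 0})"
    by (intro image_eqI[of _ _ "(take i w, drop i w)"]) auto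
qed

lemma fa_mult_closed:
  "f \<in> carrier free_alg \<Longrightarrow> g \<in> carrier free_alg \<Longrightarrow> fa_mult f g \<in> carrier free_alg"
  unfolding free_alg_carrier using fa_mult_support[of f g] by (auto intro: finite_subset)

lemma fa_mult_assoc: "fa_mult (fa_mult f g) h = fa_mult f (fa_mult g h)"
proof
  fix w :: "hgen list"
  let ?n = "length w"
  have "fa_mult (fa_mult f g) h w
      = (\<Sum>i\<le>?n. \<Sum>j\<le>i. f (take j w) * g (take (i - j) (drop j w)) * h (drop i w))"
    unfolding fa_mult_def
    by (rule sum.cong[OF refl]) (auto simp: sum_distrib_right min_def take_take drop_take intro!:
      sum.cong)
  also have "\<dots> = (\<Sum>j\<le>?n. \<Sum>k\<le>?n - j. f (take j w) * g (take (j + k - j) (drop j w))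
    * h (drop (j + k) w))"
    by (rule sum_triangle_reindex)
  also have "\<dots> = fa_mult f (fa_mult g h) w"
    unfolding fa_mult_def
    by (rule sum.cong[OF refl]) (auto simp: sum_distrib_left drop_drop add.commute mult.assoc
      intro!: sum.cong)
  finally show "fa_mult (fa_mult f g) h w = fa_mult f (fa_mult g h) w" .
qed

lemma fa_word_closed: "fa_word u \<in> carrier free_alg"
  unfolding free_alg_carrier fa_word_def by auto

lemma fa_mult_one_left: "fa_mult (fa_word []) g = g"
proof
  fix w
  have "fa_mult (fa_word []) g w = (\<Sum>i\<le>length w. if i = 0 then g w else 0)"
    unfolding fa_mult_def fa_word_def by (rule sum.cong) auto
  then show "fa_mult (fa_word []) g w = g w" by simp
qed

lemma fa_mult_one_right: "fa_mult f (fa_word []) = f"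
proof
  fix w
  have "fa_mult f (fa_word []) w = (\<Sum>i\<le>length w. if i = length w then f w else 0)"
    unfolding fa_mult_def fa_word_def by (rule sum.cong) auto
  then show "fa_mult f (fa_word []) w = f w" by simp
qed

lemma fa_mult_add_left: "fa_mult (f + h) g = fa_mult f g + fa_mult h g"
  unfolding fa_mult_def by (auto simp: fun_eq_iff sum.distrib algebra_simps)

lemma fa_mult_add_right: "fa_mult f (g + h) = fa_mult f g + fa_mult f h"
  unfolding fa_mult_def by (auto simp: fun_eq_iff sum.distrib algebra_simps)

lemma type_add_ring_free_alg: "type_add_ring free_alg"
proof (rule type_add_ringI)
  show "ring free_alg"
  proof (rule ringI)
    show "abelian_group free_alg"
    proof (rule abelian_groupI)
      fix x y assume "x \<in> carrier free_alg" "y \<in> carrier free_alg"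
      then show "x \<oplus>\<^bsub>free_alg\<^esub> y \<in> carrier free_alg"
        unfolding free_alg_carrier free_alg_add
        by (auto intro: finite_subset[of _ "{w. x w \<noteq> 0} \<union> {w. y w \<noteq> 0}"])
    next
      fix x assume "x \<in> carrier free_alg"
      then have "- x \<in> carrier free_alg" unfolding free_alg_carrier by simp
      then show "\<exists>y\<in>carrier free_alg. y \<oplus>\<^bsub>free_alg\<^esub> x = \<zero>\<^bsub>free_alg\<^esub>"
        by (intro bexI[of _ "- x"]) auto
    qed (auto simp: free_alg_carrier add.commute add.assoc)
    show "monoid free_alg"
      by (rule monoidI) (auto simp: free_alg_mult free_alg_one fa_mult_closed fa_word_closed
          fa_mult_assoc fa_mult_one_left fa_mult_one_right)
  qed (simp_all add: free_alg_mult fa_mult_add_left fa_mult_add_right)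
qed simp_all

interpretation FA: type_add_ring free_alg
  by (rule type_add_ring_free_alg)

lemma fa_word_mult: "fa_mult (fa_word u) (fa_word v) = fa_word (u @ v)"
proof
  fix w :: "hgen list"
  have "fa_mult (fa_word u) (fa_word v) w = (\<Sum>i\<le>length w. if i = length u \<and> w
    = u @ v then 1 else 0)"
    unfolding fa_mult_def fa_word_def
  proof (rule sum.cong[OF refl])
    fix i assume i: "i \<in> {..length w}"
    have "(take i w = u \<and> drop i w = v) \<longleftrightarrow> (i = length u \<and> w = u @ v)"
    proof
      assume h: "take i w = u \<and> drop i w = v"
      then have "length u = i" using i by auto
      moreover have "w = u @ v" using h by (metis append_take_drop_id)
      ultimately show "i = length u \<and> w = u @ v" by simp
    qed auto
    then show "(if take i w = u then 1 else 0) * (if drop i w = v then 1 else 0) =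
      (if i = length u \<and> w = u @ v then 1 else (0::complex))" by auto
  qed
  also have "\<dots> = fa_word (u @ v) w" unfolding fa_word_def by auto
  finally show "fa_mult (fa_word u) (fa_word v) w = fa_word (u @ v) w" .
qed

lemma fa_mult_smult_left: "fa_mult (fa_smult c f) g = fa_smult c (fa_mult f g)"
  unfolding fa_mult_def fa_smult_def by (auto simp: fun_eq_iff sum_distrib_left mult.assoc)

lemma fa_mult_smult_right: "fa_mult f (fa_smult c g) = fa_smult c (fa_mult f g)"
  unfolding fa_mult_def fa_smult_def by (auto simp: fun_eq_iff sum_distrib_left algebra_simps)

lemma fa_mult_diff_left: "fa_mult (f - h) g = fa_mult f g - fa_mult h g"
  unfolding fa_mult_def by (auto simp: fun_eq_iff sum_subtractf algebra_simps)

lemma fa_mult_diff_right: "fa_mult f (g - h) = fa_mult f g - fa_mult f h"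
  unfolding fa_mult_def by (auto simp: fun_eq_iff sum_subtractf algebra_simps)

lemma fa_mult_sum_right: "fa_mult g (sum F S) = (\<Sum>x\<in>S. fa_mult g (F x))"
proof (induct S rule: infinite_finite_induct)
  case (insert x S)
  show ?case by (simp only: sum.insert[OF insert(1,2)] fa_mult_add_right insert(3))
qed (simp_all add: fa_mult_def fun_eq_iff)

lemma fa_smult_add: "fa_smult c (f + g) = fa_smult c f + fa_smult c g"
  unfolding fa_smult_def by (auto simp: fun_eq_iff algebra_simps)

lemma fa_smult_diff: "fa_smult c (f - g) = fa_smult c f - fa_smult c g"
  unfolding fa_smult_def by (auto simp: fun_eq_iff algebra_simps)

lemma fa_smult_smult: "fa_smult c (fa_smult d f) = fa_smult (c * d) f"
  unfolding fa_smult_def by (auto simp: fun_eq_iff)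

lemma fa_smult_one[simp]: "fa_smult 1 f = f"
  unfolding fa_smult_def by simp

lemma fa_smult_zero[simp]: "fa_smult 0 f = 0"
  unfolding fa_smult_def by (simp add: fun_eq_iff)

lemma fa_smult_closed: "f \<in> carrier free_alg \<Longrightarrow> fa_smult c f \<in> carrier free_alg"
  unfolding free_alg_carrier fa_smult_def by (auto intro: finite_subset[of _ "{w. f w \<noteq> 0}"])

lemma fa_scalar_eq: "fa_scalar c = fa_smult c (fa_word [])"
  unfolding fa_scalar_def fa_smult_def fa_word_def by auto

lemma fa_mult_scalar_left: "fa_mult (fa_scalar c) f = fa_smult c f"
  unfolding fa_scalar_eq fa_mult_smult_left fa_mult_one_left ..

lemma fa_scalar_closed: "fa_scalar c \<in> carrier free_alg"
  unfolding fa_scalar_eq by (rule fa_smult_closed[OF fa_word_closed])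

lemma fa_gen_eq: "fa_gen g = fa_word [g]"
  unfolding fa_gen_def fa_word_def by auto

lemma fa_word_expansion:
  "f \<in> carrier free_alg \<Longrightarrow> f = (\<Sum>w\<in>{w. f w \<noteq> 0}. fa_smult (f w) (fa_word w))"
proof
  fix v assume f: "f \<in> carrier free_alg"
  have "(\<Sum>w\<in>{w. f w \<noteq> 0}. fa_smult (f w) (fa_word w)) v
    = (\<Sum>w\<in>{w. f w \<noteq> 0}. if w = v then f v else 0)"
    unfolding sum_fun_apply fa_smult_def fa_word_def by (rule sum.cong) auto
  also have "\<dots> = f v" using finite_support_free_alg[OF f] by auto
  finally show "f v = (\<Sum>w\<in>{w. f w \<noteq> 0}. fa_smult (f w) (fa_word w)) v" ..
qed

lemma fa_mult_eq_sum_factorizations: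
  assumes P: "finite P" and sub: "{w. f w \<noteq> 0} \<times> {w. g w \<noteq> 0} \<subseteq> P"
  shows "fa_mult f g w = (\<Sum>p\<in>{p\<in>P. fst p @ snd p = w}. f (fst p) * g (snd p))"
proof -
  let ?spl = "(\<lambda>i. (take i w, drop i w)) ` {..length w}"
  have inj: "inj_on (\<lambda>i. (take i w, drop i w)) {..length w}"
    by (rule inj_onI) (metis Pair_inject atMost_iff length_take min.absorb2)
  have Qsub: "{p\<in>P. fst p @ snd p = w} \<subseteq> ?spl"
  proof
    fix p assume "p \<in> {p\<in>P. fst p @ snd p = w}"
    then have e: "fst p @ snd p = w" by blast
    then have "p = (take (length (fst p)) w, drop (length (fst p)) w)" by (cases p) auto
    moreover have "length (fst p) \<in> {..length w}" using e by auto
    ultimately show "p \<in> ?spl" by blast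
  qed
  have "fa_mult f g w = (\<Sum>p\<in>?spl. f (fst p) * g (snd p))"
    unfolding fa_mult_def sum.reindex[OF inj] by simp
  also have "(\<Sum>p\<in>?spl. f (fst p) * g (snd p)) = (\<Sum>p\<in>{p\<in>P. fst p @ snd p = w}. f (fst p)
    * g (snd p))"
  proof (rule sum.mono_neutral_right)
    show "finite ?spl" by simp
    show "{p\<in>P. fst p @ snd p = w} \<subseteq> ?spl" by (rule Qsub)
    show "\<forall>i\<in>?spl - {p\<in>P. fst p @ snd p = w}. f (fst i) * g (snd i) = 0"
    proof
      fix p assume p: "p \<in> ?spl - {p\<in>P. fst p @ snd p = w}"
      then have "p \<in> ?spl" by blast
      then have app: "fst p @ snd p = w" by auto
      then have "p \<notin> P" using p by blast
      then have "p \<notin> {w. f w \<noteq> 0} \<times> {w. g w \<noteq> 0}" using sub by blast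
      then show "f (fst p) * g (snd p) = 0" by (cases p) auto
    qed
  qed
  finally show ?thesis .
qed

section \<open>The presentation of the Heisenberg algebra\<close>

context heisenberg
begin

definition gen_R :: "hgen \<Rightarrow> nat \<Rightarrow> nat \<Rightarrow> nat \<Rightarrow> complex" where
  "gen_R g = (case g of GenX \<Rightarrow> X_R | GenP \<Rightarrow> P_R | GenL \<Rightarrow> Lam_R)"

definition word_R :: "hgen list \<Rightarrow> nat \<Rightarrow> nat \<Rightarrow> nat \<Rightarrow> complex" where
  "word_R w = foldr (\<lambda>g acc. gen_R g \<otimes>\<^bsub>R\<^esub> acc) w (one R)"

definition eval_R :: "(hgen list \<Rightarrow> complex) \<Rightarrow> nat \<Rightarrow> nat \<Rightarrow> nat \<Rightarrow> complex" where
  "eval_R f = (\<Sum>w\<in>{w. f w \<noteq> 0}. lpx_smult (f w) (word_R w))"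

lemma gen_R_closed: "gen_R g \<in> carrier R"
  unfolding gen_R_def using Lam_R_closed P_R_closed X_R_closed by (cases g) auto

lemma word_R_Nil: "word_R [] = one R" unfolding word_R_def by simp
lemma word_R_Cons: "word_R (g # w) = gen_R g \<otimes>\<^bsub>R\<^esub> word_R w" unfolding word_R_def by simp

lemma word_R_closed: "word_R w \<in> carrier R"
proof (induct w)
  case Nil show ?case unfolding word_R_Nil by (rule R.one_closed)
next
  case (Cons g w) show ?case unfolding word_R_Cons by (rule R.m_closed[OF gen_R_closed Cons])
qed

lemma word_R_append: "word_R (u @ v) = word_R u \<otimes>\<^bsub>R\<^esub> word_R v"
proof (induct u)
  case Nil show ?case unfolding append_Nil word_R_Nil by (rule R.l_one[symmetric, OF word_R_closed])
next
  case (Cons g u)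
  show ?case unfolding append_Cons word_R_Cons Cons
    by (rule R.m_assoc[symmetric]) (auto intro: gen_R_closed word_R_closed)
qed

lemma eval_R_eq_sum: "finite S \<Longrightarrow> {w. f w \<noteq> 0} \<subseteq> S \<Longrightarrow> eval_R f = (\<Sum>w\<in>S. lpx_smult (f w) (word_R w))"
  unfolding eval_R_def by (rule sum.mono_neutral_left) auto

lemma eval_R_closed: "eval_R f \<in> carrier R"
  unfolding eval_R_def by (intro R.sum_closed lpx_smult_closed word_R_closed)

lemma eval_R_add: "f \<in> carrier free_alg \<Longrightarrow> g \<in> carrier free_alg \<Longrightarrow> eval_R (f + g) = eval_R f
    + eval_R g"
proof -
  assume f: "f \<in> carrier free_alg" and g: "g \<in> carrier free_alg"
  let ?S = "{w. f w \<noteq> 0} \<union> {w. g w \<noteq> 0}"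
  have fin: "finite ?S" using finite_support_free_alg[OF f] finite_support_free_alg[OF g] by simp
  have "eval_R (f + g) = (\<Sum>w\<in>?S. lpx_smult ((f + g) w) (word_R w))"
    by (rule eval_R_eq_sum[OF fin]) auto
  also have "\<dots> = (\<Sum>w\<in>?S. lpx_smult (f w) (word_R w)) + (\<Sum>w\<in>?S. lpx_smult (g w) (word_R w))"
    unfolding sum.distrib[symmetric] by (rule sum.cong) (auto simp: lpx_smult_add_scalar)
  also have "\<dots> = eval_R f + eval_R g" using eval_R_eq_sum[OF fin, of f] eval_R_eq_sum[OF fin, of g]
    by auto
  finally show ?thesis .
qed

lemma eval_R_smult: "f \<in> carrier free_alg \<Longrightarrow> eval_R (fa_smult c f) = lpx_smult c (eval_R f)"
proof -
  assume f: "f \<in> carrier free_alg"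
  let ?S = "{w. f w \<noteq> 0}"
  have fin: "finite ?S" using finite_support_free_alg[OF f] by simp
  have "eval_R (fa_smult c f) = (\<Sum>w\<in>?S. lpx_smult (fa_smult c f w) (word_R w))"
    by (rule eval_R_eq_sum[OF fin]) (auto simp: fa_smult_def)
  also have "\<dots> = lpx_smult c (eval_R f)" unfolding eval_R_def lpx_smult_sum
    by (rule sum.cong) (auto simp: fa_smult_def lpx_smult_lpx_smult)
  finally show ?thesis .
qed

lemma eval_R_word: "eval_R (fa_word u) = word_R u"
proof -
  have "eval_R (fa_word u) = (\<Sum>w\<in>{u}. lpx_smult (fa_word u w) (word_R w))"
    by (rule eval_R_eq_sum) (auto simp: fa_word_def)
  then show ?thesis by (simp add: fa_word_def)
qed

lemma eval_R_zero: "eval_R 0 = 0" unfolding eval_R_def by simp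

lemma eval_R_uminus: "f \<in> carrier free_alg \<Longrightarrow> eval_R (- f) = - eval_R f"
proof -
  assume f: "f \<in> carrier free_alg"
  have "- f = fa_smult (-1) f" unfolding fa_smult_def by (auto simp: fun_eq_iff)
  then have "eval_R (- f) = lpx_smult (-1) (eval_R f)" using eval_R_smult[OF f] by simp
  then show ?thesis unfolding lpx_smult_def by (auto simp: fun_eq_iff)
qed

lemma eval_R_diff: "f \<in> carrier free_alg \<Longrightarrow> g \<in> carrier free_alg \<Longrightarrow> eval_R (f - g)
    = eval_R f - eval_R g"
proof -
  assume f: "f \<in> carrier free_alg" and g: "g \<in> carrier free_alg"
  have mg: "- g \<in> carrier free_alg" using g unfolding free_alg_carrier by simp
  have "f - g = f + (- g)" by simp
  then show ?thesis using eval_R_add[OF f mg] eval_R_uminus[OF g] by simp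
qed

lemma eval_R_fa_mult_eq_sum:
  assumes f: "f \<in> carrier free_alg" and g: "g \<in> carrier free_alg"
  shows "eval_R (fa_mult f g) =
    (\<Sum>u\<in>{w. f w \<noteq> 0}. \<Sum>v\<in>{w. g w \<noteq> 0}. lpx_smult (f u * g v) (word_R (u @ v)))"
proof -
  define P where "P = {w. f w \<noteq> 0} \<times> {w. g w \<noteq> 0}"
  define app where "app = (\<lambda>p::hgen list \<times> hgen list. fst p @ snd p)"
  have fin: "finite P" "finite (app ` P)"
    unfolding P_def using finite_support_free_alg[OF f] finite_support_free_alg[OF g] by simp_all
  have coeff: "lpx_smult (fa_mult f g w) (word_R w)
      = (\<Sum>p\<in>{p. p \<in> P \<and> app p = w}. lpx_smult (f (fst p) * g (snd p)) (word_R (app p)))" for w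
  proof -
    have "lpx_smult (fa_mult f g w) (word_R w)
        = lpx_smult (\<Sum>p\<in>{p. p \<in> P \<and> app p = w}. f (fst p) * g (snd p)) (word_R w)"
      using fa_mult_eq_sum_factorizations[OF fin(1), of f g w] unfolding P_def app_def by simp
    also have "\<dots> = (\<Sum>p\<in>{p. p \<in> P \<and> app p = w}. lpx_smult (f (fst p) * g (snd p)) (word_R (app p)))"
      unfolding lpx_smult_sum_scalar by (rule sum.cong) auto
    finally show ?thesis .
  qed
  have "eval_R (fa_mult f g) = (\<Sum>w\<in>app ` P. lpx_smult (fa_mult f g w) (word_R w))"
    using fa_mult_support[of f g] unfolding P_def app_def
    by (intro eval_R_eq_sum) (auto simp: case_prod_beta fin(2)[unfolded P_def app_def])
  also have "\<dots> = (\<Sum>p\<in>P. lpx_smult (f (fst p) * g (snd p)) (word_R (app p)))"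
    unfolding coeff by (rule sum.group[OF fin]) simp
  also have "\<dots> = (\<Sum>u\<in>{w. f w \<noteq> 0}. \<Sum>v\<in>{w. g w \<noteq> 0}. lpx_smult (f u * g v) (word_R (u @ v)))"
    unfolding P_def app_def sum.cartesian_product by (simp add: case_prod_beta)
  finally show ?thesis .
qed

lemma eval_R_mult: "f \<in> carrier free_alg \<Longrightarrow> g \<in> carrier free_alg \<Longrightarrow>
    eval_R (fa_mult f g) = eval_R f \<otimes>\<^bsub>R\<^esub> eval_R g"
proof -
  assume f: "f \<in> carrier free_alg" and g: "g \<in> carrier free_alg"
  have term_closed: "lpx_smult c (word_R w) \<in> carrier R" for c w
    by (intro lpx_smult_closed word_R_closed)
  have "eval_R f \<otimes>\<^bsub>R\<^esub> eval_R g = (\<Sum>u\<in>{w. f w \<noteq> 0}. \<Sum>v\<in>{w. g w \<noteq> 0}.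
      lpx_smult (f u) (word_R u) \<otimes>\<^bsub>R\<^esub> lpx_smult (g v) (word_R v))"
    unfolding eval_R_def using term_closed
    by (simp add: R.mult_sum_left R.mult_sum_right R.sum_closed sum.swap[of _ "{w. g w \<noteq> 0}"])
  also have "\<dots> = eval_R (fa_mult f g)"
    unfolding eval_R_fa_mult_eq_sum[OF f g]
    by (intro sum.cong refl) (simp add: lpx_smult_mult_left lpx_smult_mult_right word_R_closed
        lpx_smult_closed lpx_smult_lpx_smult word_R_append R.m_closed mult.commute)
  finally show ?thesis ..
qed

lemma eval_R_ring_hom: "eval_R \<in> ring_hom free_alg R"
proof (rule ring_hom_memI)
  fix x show "eval_R x \<in> carrier R" by (rule eval_R_closed)
next
  fix x y assume "x \<in> carrier free_alg" "y \<in> carrier free_alg"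
  then show "eval_R (x \<otimes>\<^bsub>free_alg\<^esub> y) = eval_R x \<otimes>\<^bsub>R\<^esub> eval_R y" "eval_R (x \<oplus>\<^bsub>free_alg\<^esub> y)
    = eval_R x \<oplus>\<^bsub>R\<^esub> eval_R y"
    by (simp_all add: free_alg_mult eval_R_mult eval_R_add)
next
  show "eval_R \<one>\<^bsub>free_alg\<^esub> = \<one>\<^bsub>R\<^esub>" unfolding free_alg_one eval_R_word word_R_Nil ..
qed

lemma ring_hom_ring_eval_R: "ring_hom_ring free_alg R eval_R"
  by (rule ring_hom_ringI2[OF FA.ring_axioms CLP.ring_ore_ext eval_R_ring_hom])

abbreviation "Q \<equiv> complex_of_real q"
abbreviation "sq \<equiv> qhalf q"

lemma Q_nonzero: "Q \<noteq> 0" using q_nonzero by simp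
lemma sq_mult_sq: "sq * sq = Q" unfolding qhalf_def by (metis power2_csqrt power2_eq_square)
lemma sq_nonzero: "sq \<noteq> 0" using sq_mult_sq Q_nonzero by auto

lemma heis_rels_eq: "heis_rels q hbar =
  {fa_smult sq (fa_word [GenX, GenP]) - fa_smult (1 / sq) (fa_word [GenP, GenX]) - fa_smult
    (\<i> * complex_of_real hbar) (fa_word [GenL]),
   fa_word [GenL, GenX] - fa_smult (1 / Q) (fa_word [GenX, GenL]),
   fa_word [GenL, GenP] - fa_smult Q (fa_word [GenP, GenL])}"
  unfolding heis_rels_def Let_def free_alg_mult fa_gen_eq fa_word_mult
  by (auto simp: fa_smult_def fun_eq_iff)

lemma word_R_single: "word_R [g] = gen_R g"
  unfolding word_R_Cons word_R_Nil by (rule R.r_one[OF gen_R_closed])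

lemma word_R_pair: "word_R [g, g'] = gen_R g \<otimes>\<^bsub>R\<^esub> gen_R g'"
  unfolding word_R_Cons[of g] word_R_single ..

lemma eval_R_heis_rels: "x \<in> heis_rels q hbar \<Longrightarrow> eval_R x = 0"
proof -
  have word_closed: "fa_smult c (fa_word u) \<in> carrier free_alg" for c u
    by (intro fa_smult_closed fa_word_closed)
  have XP_rel: "eval_R (fa_smult sq (fa_word [GenX, GenP]) - fa_smult (1 / sq)
    (fa_word [GenP, GenX])
      - fa_smult (\<i> * complex_of_real hbar) (fa_word [GenL])) = 0"
  proof -
    have "word_R [GenX, GenP] = lpx_smult (1 / Q) (lpx_mono 0 1 1)
      + lpx_smult (kappa q hbar) (lpx_mono 1 0 0)"
      unfolding word_R_pair gen_R_def P_R_eq by (simp add: X_R_mono qint_def)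
    moreover have "word_R [GenP, GenX] = lpx_mono 0 1 1"
      unfolding word_R_pair gen_R_def X_R_eq by (simp add: P_R_mono)
    moreover have "word_R [GenL] = lpx_mono 1 0 0"
      unfolding word_R_single gen_R_def Lam_R_eq by simp
    moreover have "sq / Q = 1 / sq" "sq * kappa q hbar = \<i> * complex_of_real hbar"
      using sq_mult_sq sq_nonzero unfolding kappa_def by (auto simp: field_simps)
    ultimately show ?thesis using word_closed
      by (simp add: eval_R_diff eval_R_smult fa_word_closed eval_R_word lpx_smult_add
        lpx_smult_lpx_smult)
  qed
  have LX_rel: "eval_R (fa_word [GenL, GenX] - fa_smult (1 / Q) (fa_word [GenX, GenL])) = 0"
  proof -
    have "word_R [GenL, GenX] = lpx_mono 1 0 1"
      unfolding word_R_pair gen_R_def X_R_eq by (simp add: Lam_R_mono)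
    moreover have "word_R [GenX, GenL] = lpx_smult Q (lpx_mono 1 0 1)"
      unfolding word_R_pair gen_R_def Lam_R_eq by (simp add: X_R_mono)
    ultimately show ?thesis using word_closed Q_nonzero
      by (simp add: eval_R_diff eval_R_smult fa_word_closed eval_R_word lpx_smult_lpx_smult)
  qed
  have LP_rel: "eval_R (fa_word [GenL, GenP] - fa_smult Q (fa_word [GenP, GenL])) = 0"
  proof -
    have "word_R [GenL, GenP] = lpx_mono 1 1 0"
      unfolding word_R_pair gen_R_def P_R_eq by (simp add: Lam_R_mono)
    moreover have "word_R [GenP, GenL] = lpx_smult (1 / Q) (lpx_mono 1 1 0)"
      unfolding word_R_pair gen_R_def Lam_R_eq by (simp add: P_R_mono)
    ultimately show ?thesis using word_closed Q_nonzero
      by (simp add: eval_R_diff eval_R_smult fa_word_closed eval_R_word lpx_smult_lpx_smult)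
  qed
  assume "x \<in> heis_rels q hbar"
  then show "eval_R x = 0" unfolding heis_rels_eq using XP_rel LX_rel LP_rel by blast
qed

lemma heis_rels_closed: "heis_rels q hbar \<subseteq> carrier free_alg"
  unfolding heis_rels_eq using fa_word_closed fa_smult_closed FA.diff_closed by auto

abbreviation "rel_ideal \<equiv> genideal free_alg (heis_rels q hbar)"

lemma ideal_rel_ideal: "ideal rel_ideal free_alg"
  by (rule ring.genideal_ideal[OF FA.ring_axioms heis_rels_closed])

lemma rel_ideal_subset_kernel: "rel_ideal \<subseteq> a_kernel free_alg R eval_R"
proof (rule ring.genideal_minimal[OF FA.ring_axioms])
  show "ideal (a_kernel free_alg R eval_R) free_alg"
    by (rule ring_hom_ring.kernel_is_ideal[OF ring_hom_ring_eval_R])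
  show "heis_rels q hbar \<subseteq> a_kernel free_alg R eval_R"
    unfolding a_kernel_def' using heis_rels_closed eval_R_heis_rels by auto
qed

lemma additive_subgroup_rel_ideal: "additive_subgroup rel_ideal free_alg"
  by (rule ideal.axioms(1)[OF ideal_rel_ideal])

lemma rel_ideal_closed: "x \<in> rel_ideal \<Longrightarrow> x \<in> carrier free_alg"
  using additive_subgroup.a_subset[OF additive_subgroup_rel_ideal] by blast

lemma rel_ideal_zero: "0 \<in> rel_ideal"
  using additive_subgroup.zero_closed[OF additive_subgroup_rel_ideal] by simp

lemma rel_ideal_add: "x \<in> rel_ideal \<Longrightarrow> y \<in> rel_ideal \<Longrightarrow> x + y \<in> rel_ideal"
  using additive_subgroup.a_closed[OF additive_subgroup_rel_ideal, of x y] by simp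

lemma rel_ideal_mult_left: "x \<in> rel_ideal \<Longrightarrow> g \<in> carrier free_alg \<Longrightarrow> fa_mult g x \<in> rel_ideal"
  using ideal.I_l_closed[OF ideal_rel_ideal, of x g] by (simp add: free_alg_mult)

lemma rel_ideal_mult_right: "x \<in> rel_ideal \<Longrightarrow> g \<in> carrier free_alg \<Longrightarrow> fa_mult x g \<in> rel_ideal"
  using ideal.I_r_closed[OF ideal_rel_ideal, of x g] by (simp add: free_alg_mult)

lemma rel_ideal_smult: "x \<in> rel_ideal \<Longrightarrow> fa_smult c x \<in> rel_ideal"
  using rel_ideal_mult_left[OF _ fa_scalar_closed, of x c] by (simp add: fa_mult_scalar_left)

lemma rel_ideal_sum: "(\<And>x. x \<in> S \<Longrightarrow> f x \<in> rel_ideal) \<Longrightarrow> sum f S \<in> rel_ideal"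
proof (induct S rule: infinite_finite_induct)
  case (insert x F) show ?case unfolding sum.insert[OF insert(1,2)]
    by (rule rel_ideal_add) (use insert in auto)
qed (simp_all add: rel_ideal_zero)

lemma heis_rels_subset_rel_ideal: "heis_rels q hbar \<subseteq> rel_ideal"
  by (rule ring.genideal_self[OF FA.ring_axioms heis_rels_closed])

definition rel_cong :: "(hgen list \<Rightarrow> complex) \<Rightarrow> (hgen list \<Rightarrow> complex) \<Rightarrow> bool" where
  "rel_cong f g \<longleftrightarrow> f - g \<in> rel_ideal"

lemma rel_cong_refl: "rel_cong f f" unfolding rel_cong_def using rel_ideal_zero by simp
lemma rel_cong_trans[trans]: "rel_cong f g \<Longrightarrow> rel_cong g h \<Longrightarrow> rel_cong f h"
  unfolding rel_cong_def using rel_ideal_add by fastforce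

lemma rel_cong_eq_trans[trans]: "f = g \<Longrightarrow> rel_cong g h \<Longrightarrow> rel_cong f h"
  by simp

lemma rel_cong_trans_eq[trans]: "rel_cong f g \<Longrightarrow> g = h \<Longrightarrow> rel_cong f h"
  by simp
lemma rel_cong_add: "rel_cong f g \<Longrightarrow> rel_cong f' g' \<Longrightarrow> rel_cong (f + f') (g + g')"
  unfolding rel_cong_def using rel_ideal_add by (fastforce simp: algebra_simps)
lemma rel_cong_smult: "rel_cong f g \<Longrightarrow> rel_cong (fa_smult c f) (fa_smult c g)"
  unfolding rel_cong_def using rel_ideal_smult by (fastforce simp: fa_smult_diff[symmetric])
lemma rel_cong_mult_left: "rel_cong f g \<Longrightarrow> h \<in> carrier free_alg
    \<Longrightarrow> rel_cong (fa_mult h f) (fa_mult h g)"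
  unfolding rel_cong_def using rel_ideal_mult_left
    by (fastforce simp: fa_mult_diff_right[symmetric])
lemma rel_cong_mult_right: "rel_cong f g \<Longrightarrow> h \<in> carrier free_alg
    \<Longrightarrow> rel_cong (fa_mult f h) (fa_mult g h)"
  unfolding rel_cong_def using rel_ideal_mult_right
    by (fastforce simp: fa_mult_diff_left[symmetric])
lemma rel_cong_eq: "f = g \<Longrightarrow> rel_cong f g" using rel_cong_refl by simp

lemma rel_cong_context: "rel_cong f g \<Longrightarrow> rel_cong (fa_mult (fa_word u) (fa_mult f (fa_word v)))
    (fa_mult (fa_word u) (fa_mult g (fa_word v)))"
  by (intro rel_cong_mult_left rel_cong_mult_right fa_word_closed)

abbreviation "rq \<equiv> 1 / Q"

lemma P_Lam_swap: "rel_cong (fa_word [GenP, GenL]) (fa_smult rq (fa_word [GenL, GenP]))"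
proof -
  have "fa_word [GenP, GenL] - fa_smult rq (fa_word [GenL, GenP])
    = fa_smult (- rq) (fa_word [GenL, GenP] - fa_smult Q (fa_word [GenP, GenL]))"
    using Q_nonzero by (auto simp: fa_smult_def fun_eq_iff field_simps)
  moreover have "fa_word [GenL, GenP] - fa_smult Q (fa_word [GenP, GenL]) \<in> rel_ideal"
    using heis_rels_subset_rel_ideal heis_rels_eq by blast
  ultimately show ?thesis unfolding rel_cong_def using rel_ideal_smult by simp
qed

lemma X_Lam_swap: "rel_cong (fa_word [GenX, GenL]) (fa_smult Q (fa_word [GenL, GenX]))"
proof -
  have "fa_word [GenX, GenL] - fa_smult Q (fa_word [GenL, GenX])
    = fa_smult (- Q) (fa_word [GenL, GenX] - fa_smult rq (fa_word [GenX, GenL]))"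
    using Q_nonzero by (auto simp: fa_smult_def fun_eq_iff field_simps)
  moreover have "fa_word [GenL, GenX] - fa_smult rq (fa_word [GenX, GenL]) \<in> rel_ideal"
    using heis_rels_subset_rel_ideal heis_rels_eq by blast
  ultimately show ?thesis unfolding rel_cong_def using rel_ideal_smult by simp
qed

lemma X_P_swap: "rel_cong (fa_word [GenX, GenP]) (fa_smult rq (fa_word [GenP, GenX])
    + fa_smult (kappa q hbar) (fa_word [GenL]))"
proof -
  have "fa_word [GenX, GenP] - (fa_smult rq (fa_word [GenP, GenX])
    + fa_smult (kappa q hbar) (fa_word [GenL])) =
    fa_smult (1 / sq) (fa_smult sq (fa_word [GenX, GenP]) - fa_smult (1 / sq)
      (fa_word [GenP, GenX]) - fa_smult (\<i> * complex_of_real hbar) (fa_word [GenL]))"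
  proof -
    have alg: "x - (1 / Qv * y + \<i> * h / s * z) = 1 / s * (s * x - 1 / s * y - \<i> * h * z)"
      if "s \<noteq> 0" "Qv = s * s" for s Qv h x y z :: complex
      using that by (simp add: field_simps)
    show ?thesis unfolding fa_smult_def fun_eq_iff kappa_def using alg[OF sq_nonzero sq_mult_sq[symmetric]]
      by simp
  qed
  moreover have "fa_smult sq (fa_word [GenX, GenP]) - fa_smult (1 / sq) (fa_word [GenP, GenX]) -
    fa_smult (\<i> * complex_of_real hbar) (fa_word [GenL]) \<in> rel_ideal"
    using heis_rels_subset_rel_ideal heis_rels_eq by blast
  ultimately show ?thesis unfolding rel_cong_def using rel_ideal_smult by simp
qed

lemma context_word: "fa_mult (fa_word u) (fa_mult (fa_word w) (fa_word v)) = fa_word (u @ w @ v)"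
  by (simp add: fa_word_mult)

lemma context_smult: "fa_mult (fa_word u) (fa_mult (fa_smult c f) (fa_word v))
    = fa_smult c (fa_mult (fa_word u) (fa_mult f (fa_word v)))"
  by (simp add: fa_mult_smult_left fa_mult_smult_right)

lemma context_add: "fa_mult (fa_word u) (fa_mult (f + g) (fa_word v))
    = fa_mult (fa_word u) (fa_mult f (fa_word v)) + fa_mult (fa_word u) (fa_mult g (fa_word v))"
  by (simp add: fa_mult_add_left fa_mult_add_right)

lemmas context_simps = context_word context_smult context_add

lemma rel_cong_word_context: "rel_cong (fa_word w) g
    \<Longrightarrow> rel_cong (fa_word (u @ w @ v)) (fa_mult (fa_word u) (fa_mult g (fa_word v)))"
  using rel_cong_context[of "fa_word w" g u v] by (simp add: fa_word_mult)

abbreviation "Ls n \<equiv> replicate n GenL"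
abbreviation "Ps n \<equiv> replicate n GenP"
abbreviation "Xs n \<equiv> replicate n GenX"

lemma replicate_append_Cons: "replicate n x @ x # w = x # replicate n x @ w"
  by (induct n) auto

lemma P_Lam_pow_swap: "rel_cong (fa_word (GenP # Ls a))
    (fa_smult (rq ^ a) (fa_word (Ls a @ [GenP])))"
proof (induct a)
  case 0
  show ?case by (simp add: rel_cong_refl)
next
  case (Suc a)
  have "fa_word (GenP # Ls (Suc a)) = fa_word ([] @ (GenP # Ls a) @ [GenL])"
    by (simp add: replicate_append_same)
  also have "rel_cong \<dots> (fa_smult (rq ^ a) (fa_word (Ls a @ [GenP, GenL] @ [])))"
    using rel_cong_word_context[OF Suc, of "[]" "[GenL]"] by (simp add: context_simps)
  also have "rel_cong \<dots> (fa_smult (rq ^ a) (fa_smult rq (fa_word (Ls a @ [GenL, GenP] @ []))))"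
    using rel_cong_smult[OF rel_cong_word_context[OF P_Lam_swap, of "Ls a" "[]"], of "rq ^ a"]
    by (simp add: context_simps)
  also have "\<dots> = fa_smult (rq ^ Suc a) (fa_word (Ls (Suc a) @ [GenP]))"
    by (simp add: fa_smult_smult replicate_append_Cons mult.commute)
  finally show ?case .
qed

lemma X_Lam_pow_swap: "rel_cong (fa_word (GenX # Ls a))
    (fa_smult (Q ^ a) (fa_word (Ls a @ [GenX])))"
proof (induct a)
  case 0
  show ?case by (simp add: rel_cong_refl)
next
  case (Suc a)
  have "fa_word (GenX # Ls (Suc a)) = fa_word ([] @ (GenX # Ls a) @ [GenL])"
    by (simp add: replicate_append_same)
  also have "rel_cong \<dots> (fa_smult (Q ^ a) (fa_word (Ls a @ [GenX, GenL] @ [])))"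
    using rel_cong_word_context[OF Suc, of "[]" "[GenL]"] by (simp add: context_simps)
  also have "rel_cong \<dots> (fa_smult (Q ^ a) (fa_smult Q (fa_word (Ls a @ [GenL, GenX] @ []))))"
    using rel_cong_smult[OF rel_cong_word_context[OF X_Lam_swap, of "Ls a" "[]"], of "Q ^ a"]
    by (simp add: context_simps)
  also have "\<dots> = fa_smult (Q ^ Suc a) (fa_word (Ls (Suc a) @ [GenX]))"
    by (simp add: fa_smult_smult replicate_append_Cons mult.commute)
  finally show ?case .
qed

lemma P_pow_Lam_swap: "rel_cong (fa_word (Ps b @ [GenL]))
    (fa_smult (rq ^ b) (fa_word (GenL # Ps b)))"
proof (induct b)
  case 0
  show ?case by (simp add: rel_cong_refl)
next
  case (Suc b)
  have "fa_word (Ps (Suc b) @ [GenL]) = fa_word ([GenP] @ (Ps b @ [GenL]) @ [])"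
    by simp
  also have "rel_cong \<dots> (fa_smult (rq ^ b) (fa_word ([] @ [GenP, GenL] @ Ps b)))"
    using rel_cong_word_context[OF Suc, of "[GenP]" "[]"] by (simp add: context_simps)
  also have "rel_cong \<dots> (fa_smult (rq ^ b) (fa_smult rq (fa_word ([] @ [GenL, GenP] @ Ps b))))"
    using rel_cong_smult[OF rel_cong_word_context[OF P_Lam_swap, of "[]" "Ps b"], of "rq ^ b"]
    by (simp add: context_simps)
  also have "\<dots> = fa_smult (rq ^ Suc b) (fa_word (GenL # Ps (Suc b)))"
    by (simp add: fa_smult_smult mult.commute)
  finally show ?case .
qed

lemma P_pow_X_P_swap: "rel_cong (fa_word (Ps b @ [GenX, GenP]))
    (fa_smult rq (fa_word (Ps (Suc b) @ [GenX])) + fa_smult (kappa q hbar * rq ^ b)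
      (fa_word (GenL # Ps b)))"
proof -
  have "rel_cong (fa_word (Ps b @ [GenX, GenP]))
      (fa_smult rq (fa_word (Ps b @ [GenP, GenX]))
        + fa_smult (kappa q hbar) (fa_word (Ps b @ [GenL])))"
    using rel_cong_word_context[OF X_P_swap, of "Ps b" "[]"]
    by (simp only: context_simps append.simps append_assoc append_Nil2)
  also have "rel_cong \<dots> (fa_smult rq (fa_word (Ps b @ [GenP, GenX]))
      + fa_smult (kappa q hbar * rq ^ b) (fa_word (GenL # Ps b)))"
    using rel_cong_smult[OF P_pow_Lam_swap, of "kappa q hbar"]
    by (intro rel_cong_add[OF rel_cong_refl]) (simp add: fa_smult_smult)
  finally show ?thesis by (simp add: replicate_append_Cons)
qed

text \<open>Moving x to the right through p^b produces a Lambda-term at each p; their coefficients add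
  up to the q-integer [b].\<close>
lemma X_P_pow_swap: "rel_cong (fa_word (GenX # Ps b)) (fa_smult (rq ^ b) (fa_word (Ps b @ [GenX]))
    + fa_smult (kappa q hbar * qint q b) (fa_word (GenL # Ps (b - 1))))"
proof (induct b)
  case 0
  show ?case by (simp add: rel_cong_refl)
next
  case (Suc b)
  let ?k = "kappa q hbar"
  have "fa_word (GenX # Ps (Suc b)) = fa_word ([] @ (GenX # Ps b) @ [GenP])"
    by (simp add: replicate_append_same)
  also have "rel_cong \<dots> (fa_smult (rq ^ b) (fa_word (Ps b @ [GenX, GenP]))
      + fa_smult (?k * qint q b) (fa_word (GenL # Ps (b - 1) @ [GenP])))"
    using rel_cong_word_context[OF Suc, of "[]" "[GenP]"]
    by (simp only: context_simps append.simps append_assoc)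
  also have "\<dots> = fa_smult (rq ^ b) (fa_word (Ps b @ [GenX, GenP]))
      + fa_smult (?k * qint q b) (fa_word (GenL # Ps b))"
    by (cases b) (simp_all add: replicate_append_same)
  also have "rel_cong \<dots> (fa_smult (rq ^ Suc b) (fa_word (Ps (Suc b) @ [GenX]))
      + fa_smult (?k * rq ^ b * rq ^ b) (fa_word (GenL # Ps b))
        + fa_smult (?k * qint q b) (fa_word (GenL # Ps b)))"
    using rel_cong_smult[OF P_pow_X_P_swap, of "rq ^ b"]
    by (intro rel_cong_add[OF _ rel_cong_refl]) (simp add: fa_smult_add fa_smult_smult ac_simps)
  also have "\<dots> = fa_smult (rq ^ Suc b) (fa_word (Ps (Suc b) @ [GenX]))
      + fa_smult (?k * qint q (Suc b)) (fa_word (GenL # Ps (Suc b - 1)))"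
    unfolding qint_Suc fa_smult_def by (auto simp: fun_eq_iff algebra_simps)
  finally show ?case .
qed

definition normal_word :: "nat \<Rightarrow> nat \<Rightarrow> nat \<Rightarrow> hgen list" where
  "normal_word a b c = Ls a @ Ps b @ Xs c"

definition gen_count :: "hgen \<Rightarrow> hgen list \<Rightarrow> nat" where
  "gen_count g w = length (filter (\<lambda>x. x = g) w)"

definition normal_form :: "(nat \<Rightarrow> nat \<Rightarrow> nat \<Rightarrow> complex) \<Rightarrow> hgen list \<Rightarrow> complex" where
  "normal_form F = (\<lambda>w. if w = normal_word (gen_count GenL w) (gen_count GenP w) (gen_count GenX w)
      then F (gen_count GenX w) (gen_count GenP w) (gen_count GenL w) else 0)"

lemma gen_count_normal_word[simp]: "gen_count GenL (normal_word a b c)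
    = a" "gen_count GenP (normal_word a b c) = b" "gen_count GenX (normal_word a b c) = c"
  unfolding gen_count_def normal_word_def by (auto simp: filter_replicate)

lemma normal_form_add: "normal_form (F + G) = normal_form F + normal_form G"
  unfolding normal_form_def by (auto simp: fun_eq_iff)
lemma normal_form_smult: "normal_form (lpx_smult k F) = fa_smult k (normal_form F)"
  unfolding normal_form_def lpx_smult_def fa_smult_def by (auto simp: fun_eq_iff)
lemma normal_form_zero: "normal_form 0 = 0"
  unfolding normal_form_def by (auto simp: fun_eq_iff)
lemma normal_form_sum: "normal_form (sum F S) = (\<Sum>x\<in>S. normal_form (F x))"
proof (induct S rule: infinite_finite_induct)
  case (insert x S) show ?case unfolding sum.insert[OF insert(1,2)] normal_form_add insert(3) ..
next
  case (infinite S) show ?case unfolding sum.infinite[OF infinite] normal_form_zero ..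
next
  case empty show ?case unfolding sum.empty normal_form_zero ..
qed

lemma normal_form_mono: "normal_form (lpx_mono a b c) = fa_word (normal_word a b c)"
proof
  fix w
  show "normal_form (lpx_mono a b c) w = fa_word (normal_word a b c) w"
  proof (cases "w = normal_word (gen_count GenL w) (gen_count GenP w) (gen_count GenX w)")
    case True
    then show ?thesis unfolding normal_form_def lpx_mono_def fa_word_def
      by (metis (full_types) gen_count_normal_word)
  next
    case False
    then have "w \<noteq> normal_word a b c" by (metis gen_count_normal_word)
    then show ?thesis using False unfolding normal_form_def fa_word_def by simp
  qed
qed

abbreviation "box n \<equiv> {..n} \<times> {..n} \<times> {..(n::nat)}"

lemma lpx_mono_expansion: "vanishes_above3 n F \<Longrightarrow> F
    = (\<Sum>(c, b, a)\<in>box n. lpx_smult (F c b a) (lpx_mono a b c))"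
proof (intro ext)
  fix c' b' a' assume n: "vanishes_above3 n F"
  have "(\<Sum>(c, b, a)\<in>box n. lpx_smult (F c b a) (lpx_mono a b c)) c' b' a'
      = (\<Sum>t\<in>box n. if t = (c', b', a') then F c' b' a' else 0)"
    unfolding sum_fun_apply by (rule sum.cong) (auto simp: lpx_smult_def lpx_mono_def split:
      if_splits)
  also have "\<dots> = F c' b' a'" using n unfolding vanishes_above3_def by (auto simp: not_le)
  finally show "F c' b' a' = (\<Sum>(c, b, a)\<in>box n. lpx_smult (F c b a) (lpx_mono a b c)) c' b' a'" ..
qed

lemma normal_form_expansion: "vanishes_above3 n F \<Longrightarrow> normal_form F
    = (\<Sum>(c, b, a)\<in>box n. fa_smult (F c b a) (fa_word (normal_word a b c)))"
proof -
  assume n: "vanishes_above3 n F"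
  have "normal_form F = normal_form (\<Sum>(c, b, a)\<in>box n. lpx_smult (F c b a) (lpx_mono a b c))"
    using lpx_mono_expansion[OF n] by simp
  also have "\<dots> = (\<Sum>(c, b, a)\<in>box n. fa_smult (F c b a) (fa_word (normal_word a b c)))"
    unfolding normal_form_sum by (rule sum.cong) (auto simp: normal_form_smult normal_form_mono)
  finally show ?thesis .
qed

lemma normal_form_closed: "F \<in> carrier R \<Longrightarrow> normal_form F \<in> carrier free_alg"
proof -
  assume "F \<in> carrier R"
  then obtain n where n: "vanishes_above3 n F" unfolding R_carrier by blast
  show ?thesis unfolding normal_form_expansion[OF n]
    by (rule FA.sum_closed) (auto intro: fa_smult_closed fa_word_closed)
qed

lemma eval_R_sum: "(\<And>x. x \<in> S \<Longrightarrow> f x \<in> carrier free_alg) \<Longrightarrow> eval_R (sum f S) = (\<Sum>x\<in>S. eval_R (f x))"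
proof (induct S rule: infinite_finite_induct)
  case (insert x S)
  have "eval_R (sum f (insert x S)) = eval_R (f x + sum f S)"
    unfolding sum.insert[OF insert(1,2)] ..
  also have "\<dots> = eval_R (f x) + eval_R (sum f S)"
    by (rule eval_R_add) (use insert in \<open>auto intro: FA.sum_closed\<close>)
  also have "\<dots> = (\<Sum>x\<in>insert x S. eval_R (f x))" using insert by simp
  finally show ?case .
qed (simp_all add: eval_R_zero)

lemma word_R_Xs: "word_R (Xs c) = lpx_mono 0 0 c"
proof (induct c)
  case 0 show ?case using word_R_Nil R_one by simp
next
  case (Suc c)
  show ?case unfolding replicate_Suc word_R_Cons Suc by (simp add: gen_R_def X_R_mono qint_def)
qed

lemma word_R_Ps_Xs: "word_R (Ps b @ Xs c) = lpx_mono 0 b c"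
proof (induct b)
  case 0 show ?case using word_R_Xs by simp
next
  case (Suc b)
  show ?case unfolding replicate_Suc append_Cons word_R_Cons Suc by (simp add: gen_R_def P_R_mono)
qed

lemma word_R_normal_word: "word_R (normal_word a b c) = lpx_mono a b c"
  unfolding normal_word_def
proof (induct a)
  case 0 show ?case using word_R_Ps_Xs by simp
next
  case (Suc a)
  show ?case unfolding replicate_Suc append_Cons word_R_Cons Suc by (simp add: gen_R_def Lam_R_mono)
qed

lemma eval_R_normal_form: "F \<in> carrier R \<Longrightarrow> eval_R (normal_form F) = F"
proof -
  assume "F \<in> carrier R"
  then obtain n where n: "vanishes_above3 n F" unfolding R_carrier by blast
  have "eval_R (normal_form F) = (\<Sum>(c, b, a)\<in>box n. eval_R
    (fa_smult (F c b a) (fa_word (normal_word a b c))))"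
    unfolding normal_form_expansion[OF n] by (subst eval_R_sum)
      (auto intro: fa_smult_closed fa_word_closed simp: case_prod_beta)
  also have "\<dots> = (\<Sum>(c, b, a)\<in>box n. lpx_smult (F c b a) (lpx_mono a b c))"
    by (rule sum.cong) (auto simp: eval_R_smult fa_word_closed eval_R_word word_R_normal_word)
  also have "\<dots> = F" using lpx_mono_expansion[OF n] by simp
  finally show ?thesis .
qed

lemma rel_cong_sum: "(\<And>x. x \<in> S \<Longrightarrow> rel_cong (f x) (g x)) \<Longrightarrow> rel_cong (sum f S) (sum g S)"
proof -
  assume h: "\<And>x. x \<in> S \<Longrightarrow> rel_cong (f x) (g x)"
  have "sum f S - sum g S = (\<Sum>x\<in>S. f x - g x)" by (simp add: sum_subtractf)
  moreover have "(\<Sum>x\<in>S. f x - g x) \<in> rel_ideal" using h unfolding rel_cong_def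
    by (intro rel_ideal_sum)
  ultimately show ?thesis unfolding rel_cong_def by simp
qed

lemma Lam_normal_word_cong: "rel_cong (fa_mult (fa_word [GenL]) (fa_word (normal_word a b c)))
    (normal_form (Lam_R \<otimes>\<^bsub>R\<^esub> lpx_mono a b c))"
  unfolding Lam_R_mono normal_form_mono fa_word_mult
    by (rule rel_cong_eq) (simp add: normal_word_def)

lemma P_normal_word_cong: "rel_cong (fa_mult (fa_word [GenP]) (fa_word (normal_word a b c)))
    (normal_form (P_R \<otimes>\<^bsub>R\<^esub> lpx_mono a b c))"
proof -
  have "fa_mult (fa_word [GenP]) (fa_word (normal_word a b c))
    = fa_word ([] @ (GenP # Ls a) @ (Ps b @ Xs c))"
    unfolding fa_word_mult by (simp add: normal_word_def)
  also have "rel_cong \<dots> (fa_mult (fa_word []) (fa_mult (fa_smult (rq ^ a) (fa_word (Ls a @ [GenP])))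
      (fa_word (Ps b @ Xs c))))"
    by (rule rel_cong_word_context[OF P_Lam_pow_swap])
  also have "\<dots> = normal_form (P_R \<otimes>\<^bsub>R\<^esub> lpx_mono a b c)"
    unfolding P_R_mono normal_form_smult normal_form_mono context_smult context_word
    by (simp add: normal_word_def)
  finally show ?thesis .
qed

lemma X_normal_word_cong: "rel_cong (fa_mult (fa_word [GenX]) (fa_word (normal_word a b c)))
    (normal_form (X_R \<otimes>\<^bsub>R\<^esub> lpx_mono a b c))"
proof -
  let ?k = "kappa q hbar"
  have "fa_mult (fa_word [GenX]) (fa_word (normal_word a b c))
    = fa_word ([] @ (GenX # Ls a) @ (Ps b @ Xs c))"
    unfolding fa_word_mult by (simp add: normal_word_def)
  also have "rel_cong \<dots> (fa_mult (fa_word []) (fa_mult (fa_smult (Q ^ a) (fa_word (Ls a @ [GenX])))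
      (fa_word (Ps b @ Xs c))))"
    by (rule rel_cong_word_context[OF X_Lam_pow_swap])
  also have "\<dots> = fa_smult (Q ^ a) (fa_word (Ls a @ (GenX # Ps b) @ Xs c))"
    unfolding context_smult context_word by simp
  also have "rel_cong \<dots> (fa_smult (Q ^ a) (fa_mult (fa_word (Ls a))
      (fa_mult (fa_smult (rq ^ b) (fa_word (Ps b @ [GenX]))
        + fa_smult (?k * qint q b) (fa_word (GenL # Ps (b - 1)))) (fa_word (Xs c)))))"
    by (intro rel_cong_smult rel_cong_word_context X_P_pow_swap)
  also have "\<dots> = normal_form (X_R \<otimes>\<^bsub>R\<^esub> lpx_mono a b c)"
    unfolding X_R_mono normal_form_add normal_form_smult normal_form_mono
      context_add context_smult context_word
    by (simp add: normal_word_def replicate_append_Cons fa_smult_add fa_smult_smult ac_simps)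
  finally show ?thesis .
qed

lemma gen_normal_form_cong: "F \<in> carrier R \<Longrightarrow> rel_cong (fa_mult (fa_word [g]) (normal_form F))
    (normal_form (gen_R g \<otimes>\<^bsub>R\<^esub> F))"
proof -
  assume F: "F \<in> carrier R"
  then obtain n where n: "vanishes_above3 n F" unfolding R_carrier by blast
  have mono: "rel_cong (fa_mult (fa_word [g]) (fa_word (normal_word a b c)))
    (normal_form (gen_R g \<otimes>\<^bsub>R\<^esub> lpx_mono a b c))" for a b c
    unfolding gen_R_def using Lam_normal_word_cong P_normal_word_cong X_normal_word_cong
      by (cases g) auto
  have sc: "\<And>k a b c. lpx_smult k (lpx_mono a b c) \<in> carrier R"
    by (intro lpx_smult_closed lpx_mono_closed)
  have "fa_mult (fa_word [g]) (normal_form F) = (\<Sum>(c, b, a)\<in>box n. fa_smult (F c b a)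
    (fa_mult (fa_word [g]) (fa_word (normal_word a b c))))"
    unfolding normal_form_expansion[OF n] fa_mult_sum_right
      by (rule sum.cong) (auto simp: fa_mult_smult_right)
  moreover have "normal_form (gen_R g \<otimes>\<^bsub>R\<^esub> F) = (\<Sum>(c, b, a)\<in>box n. fa_smult (F c b a)
    (normal_form (gen_R g \<otimes>\<^bsub>R\<^esub> lpx_mono a b c)))"
  proof -
    have "gen_R g \<otimes>\<^bsub>R\<^esub> F = gen_R g \<otimes>\<^bsub>R\<^esub> (\<Sum>(c, b, a)\<in>box n. lpx_smult (F c b a) (lpx_mono a b c))"
      using lpx_mono_expansion[OF n] by simp
    also have "\<dots> = (\<Sum>t\<in>box n. gen_R g \<otimes>\<^bsub>R\<^esub> (case t of (c, b, a) \<Rightarrow> lpx_smult (F c b a)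
      (lpx_mono a b c)))"
      by (rule R.mult_sum_right[OF gen_R_closed]) (auto simp: sc)
    also have "\<dots> = (\<Sum>(c, b, a)\<in>box n. lpx_smult (F c b a) (gen_R g \<otimes>\<^bsub>R\<^esub> lpx_mono a b c))"
      by (rule sum.cong) (auto simp: lpx_smult_mult_right gen_R_closed lpx_mono_closed)
    finally have eq: "gen_R g \<otimes>\<^bsub>R\<^esub> F = (\<Sum>(c, b, a)\<in>box n. lpx_smult (F c b a)
      (gen_R g \<otimes>\<^bsub>R\<^esub> lpx_mono a b c))" .
    show ?thesis unfolding eq normal_form_sum by (rule sum.cong) (auto simp: normal_form_smult)
  qed
  ultimately show ?thesis using mono by (auto intro!: rel_cong_sum rel_cong_smult)
qed

lemma word_rel_cong_normal_form: "rel_cong (fa_word w) (normal_form (word_R w))"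
proof (induct w)
  case Nil show ?case unfolding word_R_Nil R_one normal_form_mono
    by (rule rel_cong_eq) (simp add: normal_word_def)
next
  case (Cons g w)
  have "fa_word (g # w) = fa_mult (fa_word [g]) (fa_word w)" by (simp add: fa_word_mult)
  moreover have "rel_cong (fa_mult (fa_word [g]) (fa_word w))
    (fa_mult (fa_word [g]) (normal_form (word_R w)))"
    by (rule rel_cong_mult_left[OF Cons fa_word_closed])
  moreover have "rel_cong (fa_mult (fa_word [g]) (normal_form (word_R w)))
    (normal_form (word_R (g # w)))"
    unfolding word_R_Cons by (rule gen_normal_form_cong[OF word_R_closed])
  ultimately show ?case using rel_cong_trans by metis
qed

lemma rel_cong_normal_form: "f \<in> carrier free_alg \<Longrightarrow> rel_cong f (normal_form (eval_R f))"
proof -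
  assume f: "f \<in> carrier free_alg"
  have "normal_form (eval_R f) = (\<Sum>w\<in>{w. f w \<noteq> 0}. fa_smult (f w) (normal_form (word_R w)))"
    unfolding eval_R_def normal_form_sum by (rule sum.cong) (auto simp: normal_form_smult)
  moreover have "rel_cong (\<Sum>w\<in>{w. f w \<noteq> 0}. fa_smult (f w) (fa_word w))
    (\<Sum>w\<in>{w. f w \<noteq> 0}. fa_smult (f w) (normal_form (word_R w)))"
    by (intro rel_cong_sum rel_cong_smult word_rel_cong_normal_form)
  ultimately show ?thesis using fa_word_expansion[OF f] by simp
qed

text \<open>Modulo the relations, every element is congruent to the normal form of its image; so an
  element
  of the kernel is congruent to normal_form 0 = 0.\<close>
lemma kernel_subset_rel_ideal: "a_kernel free_alg R eval_R \<subseteq> rel_ideal"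
proof
  fix f assume "f \<in> a_kernel free_alg R eval_R"
  then have f: "f \<in> carrier free_alg" and h: "eval_R f = 0" unfolding a_kernel_def' by auto
  have "rel_cong f (normal_form 0)" using rel_cong_normal_form[OF f] h by simp
  then show "f \<in> rel_ideal" unfolding rel_cong_def normal_form_zero by simp
qed

lemma kernel_eq_rel_ideal: "a_kernel free_alg R eval_R = rel_ideal"
  using kernel_subset_rel_ideal rel_ideal_subset_kernel by blast

lemma eval_R_surj: "eval_R ` carrier free_alg = carrier R"
proof
  show "eval_R ` carrier free_alg \<subseteq> carrier R" using eval_R_closed by blast
  show "carrier R \<subseteq> eval_R ` carrier free_alg"
  proof
    fix F assume F: "F \<in> carrier R"
    then show "F \<in> eval_R ` carrier free_alg" using eval_R_normal_form[OF F]
      normal_form_closed[OF F] by force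
  qed
qed

lemma Heis_eq_quotient_kernel: "Heis q hbar = free_alg Quot (a_kernel free_alg R eval_R)"
  unfolding Heis_def kernel_eq_rel_ideal ..

lemma Heis_iso: "(\<lambda>X. the_elem (eval_R ` X)) \<in> ring_iso (Heis q hbar) R"
  unfolding Heis_eq_quotient_kernel by (rule ring_hom_ring.FactRing_iso_set[OF ring_hom_ring_eval_R
    eval_R_surj])

lemma Heis_iso_class: "f \<in> carrier free_alg \<Longrightarrow> the_elem (eval_R ` (heis_class q hbar f)) = eval_R f"
  unfolding heis_class_def kernel_eq_rel_ideal[symmetric]
    by (rule ring_hom_ring.the_elem_simp[OF ring_hom_ring_eval_R])

lemma Heis_iso_scalar: "the_elem (eval_R ` (heis_class q hbar (fa_scalar c)))
    = ore_const (CLP q) (scalar_CLP c)"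
proof -
  have "eval_R (fa_scalar c) = lpx_smult c (lpx_mono 0 0 0)"
    unfolding fa_scalar_eq eval_R_smult[OF fa_word_closed] eval_R_word word_R_Nil R_one ..
  then show ?thesis unfolding Heis_iso_class[OF fa_scalar_closed] scalar_R_eq .
qed

lemma Heis_iso_gen: "the_elem (eval_R ` (heis_class q hbar (fa_gen g))) = gen_R g"
proof -
  have closed: "fa_gen g \<in> carrier free_alg"
    unfolding fa_gen_eq by (rule fa_word_closed)
  show ?thesis
    using Heis_iso_class[OF closed] by (simp add: fa_gen_eq eval_R_word word_R_single)
qed

lemma ex_Heis_iso_CLPX: "\<exists>\<phi>. \<phi> \<in> ring_iso (Heis q hbar) R \<and>
    (\<forall>c. \<phi> (heis_class q hbar (fa_scalar c)) = ore_const (CLP q) (scalar_CLP c)) \<and>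
    \<phi> (heis_class q hbar (fa_gen GenX)) = X_R \<and>
    \<phi> (heis_class q hbar (fa_gen GenP)) = P_R \<and>
    \<phi> (heis_class q hbar (fa_gen GenL)) = Lam_R"
  using Heis_iso Heis_iso_scalar Heis_iso_gen[of GenX] Heis_iso_gen[of GenP] Heis_iso_gen[of GenL]
  unfolding gen_R_def by auto

end

theorem mainTheorem1:
  fixes q hbar :: real
  assumes "q \<noteq> 0"
  shows
   "let A1 = ore_ext C_ring id (\<lambda>_. 0);
        c1 = ore_const C_ring;
        L1 = ore_var C_ring
    in ring A1 \<and>
       (\<exists>\<sigma>p \<delta>p.
          \<sigma>p \<in> ring_iso A1 A1 \<and> sigma_derivation A1 \<sigma>p \<delta>p \<and>
          (\<forall>c. \<sigma>p (c1 c) = c1 c \<and> \<delta>p (c1 c) = \<zero>\<^bsub>A1\<^esub>) \<and>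
          \<sigma>p L1 = c1 (complex_of_real (1 / q)) \<otimes>\<^bsub>A1\<^esub> L1 \<and>
          \<delta>p L1 = \<zero>\<^bsub>A1\<^esub> \<and>
          (let A2 = ore_ext A1 \<sigma>p \<delta>p;
               c2 = (\<lambda>c. ore_const A1 (c1 c));
               L2 = ore_const A1 L1;
               P2 = ore_var A1
           in ring A2 \<and>
              (\<exists>\<sigma>x \<delta>x.
                 \<sigma>x \<in> ring_iso A2 A2 \<and> sigma_derivation A2 \<sigma>x \<delta>x \<and>
                 (\<forall>c. \<sigma>x (c2 c) = c2 c \<and> \<delta>x (c2 c) = \<zero>\<^bsub>A2\<^esub>) \<and>
                 \<sigma>x L2 = c2 (complex_of_real q) \<otimes>\<^bsub>A2\<^esub> L2 \<and>
                 \<delta>x L2 = \<zero>\<^bsub>A2\<^esub> \<and>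
                 \<sigma>x P2 = c2 (complex_of_real (1 / q)) \<otimes>\<^bsub>A2\<^esub> P2 \<and>
                 \<delta>x P2 = c2 (\<i> * complex_of_real hbar / qhalf q) \<otimes>\<^bsub>A2\<^esub> L2 \<and>
                 (let R = ore_ext A2 \<sigma>x \<delta>x
                  in ring R \<and>
                     (\<exists>\<phi>. \<phi> \<in> ring_iso (Heis q hbar) R \<and>
                        (\<forall>c. \<phi> (heis_class q hbar (fa_scalar c)) = ore_const A2 (c2 c)) \<and>
                        \<phi> (heis_class q hbar (fa_gen GenX)) = ore_var A2 \<and>
                        \<phi> (heis_class q hbar (fa_gen GenP)) = ore_const A2 P2 \<and>
                        \<phi> (heis_class q hbar (fa_gen GenL)) = ore_const A2 L2)))))"
proof -
  interpret heisenberg q hbar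
    by unfold_locales (rule assms)
  show ?thesis
    unfolding Let_def
    by (intro conjI allI exI[of _ "sigma_P q"] exI[of _ "\<lambda>_::nat \<Rightarrow> complex. 0 :: nat \<Rightarrow> complex"]
        exI[of _ "sigma_X q"] exI[of _ "delta_X q hbar"])
      (simp_all add: C.ring_ore_ext CL.ring_ore_ext CLP.ring_ore_ext sigma_P_iso sigma_X_iso assms
        CL.sigma_derivation CLP.sigma_derivation sigma_P_scalar sigma_P_Lam sigma_X_scalar
        delta_X_scalar sigma_X_Lam delta_X_Lam sigma_X_P delta_X_P ex_Heis_iso_CLPX)
qed

end
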